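(* Let $(X,\mathcal{A},\mu)$ be a $\sigma$-finite measure space and let $(A_n)_{n\in\mathbb{N}}$ be measurable sets of finite measure with $A_n\subseteq A_{n+1}$ for all $n$ and $X=\bigcup_{n=1}^\infty A_n$. Let $\mathcal{S}$ be the set of all measurable simple functions belonging to $L^1(X)$, and let $S:\mathcal{S}\to L^1(X)$ be a linear map. Then $S$ has a unique extension to a semi-doubly stochastic operator on $L^1(X)$ if and only if $S$ is nonnegative (maps nonnegative functions to nonnegative functions) and for every measurable set $E$ with $\mu(E)<\infty$: $$\int_X S\chi_E\,d\mu=\mu(E)\qquad\text{and}\qquad \lim_{n\to\infty}\int_X \chi_E\, S\chi_{A_n}\,d\mu\le\mu(E).$$
   Context: A Markov operator on $L^1(X)$ is a positive linear operator $T:L^1(X)\to L^1(X)$ with $\int_X Tf\,d\mu=\int_X f\,d\mu$ for all $f\in L^1(X)$. A Markov operator $T$ is semi-doubly stochastic if $\int_X T^*\chi_E\,d\mu\le\mu(E)$ for every $E\in\mathcal{A}$ with $\mu(E)<\infty$, where $T^*:L^\infty(X)\to L^\infty(X)$ is the Banach adjoint. $\chi_E$ denotes the indicator function of $E$. *)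

theory Defs
  imports "HOL-Analysis.Analysis"
begin

text \<open>Elements of L^1(X) are represented by integrable real-valued functions, identified
  up to equality almost everywhere.  An operator on L^1(X) is represented by a map
  T on functions which maps integrable functions to integrable functions and respects
  a.e. equality (so it is well defined on equivalence classes).\<close>

definition L1_operator :: "'a measure \<Rightarrow> (('a \<Rightarrow> real) \<Rightarrow> ('a \<Rightarrow> real)) \<Rightarrow> bool" where
  "L1_operator M T \<longleftrightarrow>
     (\<forall>f. integrable M f \<longrightarrow> integrable M (T f)) \<and>
     (\<forall>f g. integrable M f \<longrightarrow> integrable M g \<longrightarrow> (AE x in M. f x = g x)
            \<longrightarrow> (AE x in M. T f x = T g x)) \<and>
     (\<forall>f g a b. integrable M f \<longrightarrow> integrable M g \<longrightarrow>
            (AE x in M. T (\<lambda>y. a * f y + b * g y) x = a * T f x + b * T g x))"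

definition markov_operator :: "'a measure \<Rightarrow> (('a \<Rightarrow> real) \<Rightarrow> ('a \<Rightarrow> real)) \<Rightarrow> bool" where
  "markov_operator M T \<longleftrightarrow>
     L1_operator M T \<and>
     (\<forall>f. integrable M f \<longrightarrow> (AE x in M. 0 \<le> f x) \<longrightarrow> (AE x in M. 0 \<le> T f x)) \<and>
     (\<forall>f. integrable M f \<longrightarrow> (\<integral>x. T f x \<partial>M) = (\<integral>x. f x \<partial>M))"

text \<open>g represents the Banach adjoint T^* h in L^\<infinity>(X): g is essentially bounded and
  \<integral> (T f) h = \<integral> f g for all f in L^1(X).  (Such g is unique a.e.)\<close>

definition is_adjoint_image ::
  "'a measure \<Rightarrow> (('a \<Rightarrow> real) \<Rightarrow> ('a \<Rightarrow> real)) \<Rightarrow> ('a \<Rightarrow> real) \<Rightarrow> ('a \<Rightarrow> real) \<Rightarrow> bool" where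
  "is_adjoint_image M T h g \<longleftrightarrow>
     g \<in> borel_measurable M \<and> (\<exists>C. AE x in M. \<bar>g x\<bar> \<le> C) \<and>
     (\<forall>f. integrable M f \<longrightarrow> (\<integral>x. T f x * h x \<partial>M) = (\<integral>x. f x * g x \<partial>M))"

definition semi_doubly_stochastic :: "'a measure \<Rightarrow> (('a \<Rightarrow> real) \<Rightarrow> ('a \<Rightarrow> real)) \<Rightarrow> bool" where
  "semi_doubly_stochastic M T \<longleftrightarrow>
     markov_operator M T \<and>
     (\<forall>E\<in>sets M. emeasure M E < \<infinity> \<longrightarrow>
        (\<forall>g. is_adjoint_image M T (indicator E) g \<longrightarrow>
             (\<integral>\<^sup>+x. ennreal (g x) \<partial>M) \<le> emeasure M E))"

definition simple_L1 :: "'a measure \<Rightarrow> ('a \<Rightarrow> real) set" where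
  "simple_L1 M = {f. simple_function M f \<and> integrable M f}"

definition linear_simple_map :: "'a measure \<Rightarrow> (('a \<Rightarrow> real) \<Rightarrow> ('a \<Rightarrow> real)) \<Rightarrow> bool" where
  "linear_simple_map M S \<longleftrightarrow>
     (\<forall>f\<in>simple_L1 M. integrable M (S f)) \<and>
     (\<forall>f\<in>simple_L1 M. \<forall>g\<in>simple_L1 M. (AE x in M. f x = g x) \<longrightarrow> (AE x in M. S f x = S g x)) \<and>
     (\<forall>f\<in>simple_L1 M. \<forall>g\<in>simple_L1 M. \<forall>a b.
        AE x in M. S (\<lambda>y. a * f y + b * g y) x = a * S f x + b * S g x)"

definition extends_simple :: "'a measure \<Rightarrow> (('a \<Rightarrow> real) \<Rightarrow> ('a \<Rightarrow> real)) \<Rightarrow> (('a \<Rightarrow> real) \<Rightarrow> ('a \<Rightarrow> real)) \<Rightarrow> bool" where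
  "extends_simple M S T \<longleftrightarrow> (\<forall>f\<in>simple_L1 M. AE x in M. T f x = S f x)"

end

theory Submission
  imports Defs
begin

text \<open>If \<open>S\<close> has a Markov extension \<open>T\<close>, positivity and \<open>\<integral> S \<chi>\<^sub>E = \<mu> E\<close> are inherited
  from \<open>T\<close>. The adjoint image \<open>T\<^sup>* \<chi>\<^sub>E\<close> exists: it is the Radon-Nikodym density of
  \<open>G \<mapsto> \<integral> T \<chi>\<^sub>G \<chi>\<^sub>E\<close>, a measure dominated by \<open>\<mu>\<close>. It is nonnegative, and
  \<open>\<integral> \<chi>\<^sub>E S \<chi>\<^sub>A\<^sub>n = \<integral>\<^sub>A\<^sub>n T\<^sup>* \<chi>\<^sub>E\<close> increases to \<open>\<integral> T\<^sup>* \<chi>\<^sub>E\<close>; so the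
  limit condition says exactly that this total mass is at most \<open>\<mu> E\<close>, i.e. that \<open>T\<close> is
  semi-doubly stochastic.

  Conversely, a positive \<open>S\<close> preserving \<open>\<integral> \<chi>\<^sub>E\<close> preserves integrals of simple functions.
  For integrable \<open>p \<ge> 0\<close> put \<open>T p = sup\<^sub>k S u\<^sub>k\<close> along simple \<open>u\<^sub>k \<up> p\<close>; this does not depend
  on the sequence, since \<open>S u\<^sub>j - S (min v\<^sub>k u\<^sub>j) \<ge> 0\<close> has integral tending to \<open>0\<close>. Then
  \<open>T f = T f\<^sup>+ - T f\<^sup>-\<close> is a Markov operator extending \<open>S\<close>. It is unique because Markov
  operators are \<open>L\<^sup>1\<close>-contractions and simple functions are dense in \<open>L\<^sup>1\<close>.\<close>

lemma L1_operator_integrable: "L1_operator M T \<Longrightarrow> integrable M f \<Longrightarrow> integrable M (T f)"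
  unfolding L1_operator_def by blast

lemma L1_operator_linear:
  "L1_operator M T \<Longrightarrow> integrable M f \<Longrightarrow> integrable M g \<Longrightarrow>
    AE x in M. T (\<lambda>y. a * f y + b * g y) x = a * T f x + b * T g x"
  unfolding L1_operator_def by blast

lemma L1_operator_add:
  "L1_operator M T \<Longrightarrow> integrable M f \<Longrightarrow> integrable M g \<Longrightarrow>
    AE x in M. T (\<lambda>y. f y + g y) x = T f x + T g x"
  using L1_operator_linear[of M T f g 1 1] by simp

lemma L1_operator_diff:
  "L1_operator M T \<Longrightarrow> integrable M f \<Longrightarrow> integrable M g \<Longrightarrow>
    AE x in M. T (\<lambda>y. f y - g y) x = T f x - T g x"
  using L1_operator_linear[of M T f g 1 "-1"] by simp

lemma L1_operator_cmult:
  "L1_operator M T \<Longrightarrow> integrable M f \<Longrightarrow> AE x in M. T (\<lambda>y. c * f y) x = c * T f x"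
  using L1_operator_linear[of M T f f c 0] by simp

lemma markov_operator_L1_operator: "markov_operator M T \<Longrightarrow> L1_operator M T"
  unfolding markov_operator_def by blast

lemma markov_operator_integrable: "markov_operator M T \<Longrightarrow> integrable M f \<Longrightarrow> integrable M (T f)"
  by (blast intro: L1_operator_integrable markov_operator_L1_operator)

lemma markov_operator_nonneg:
  "markov_operator M T \<Longrightarrow> integrable M f \<Longrightarrow> (AE x in M. 0 \<le> f x) \<Longrightarrow> AE x in M. 0 \<le> T f x"
  unfolding markov_operator_def by blast

lemma markov_operator_integral:
  "markov_operator M T \<Longrightarrow> integrable M f \<Longrightarrow> (\<integral>x. T f x \<partial>M) = (\<integral>x. f x \<partial>M)"
  unfolding markov_operator_def by blast

lemma markov_operator_abs_le:
  assumes T: "markov_operator M T" and f: "integrable M f"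
  shows "AE x in M. \<bar>T f x\<bar> \<le> T (\<lambda>y. \<bar>f y\<bar>) x"
proof -
  have L: "L1_operator M T" using T by (rule markov_operator_L1_operator)
  have af: "integrable M (\<lambda>y. \<bar>f y\<bar>)" using f by auto
  have "AE x in M. 0 \<le> T (\<lambda>y. \<bar>f y\<bar> - f y) x" "AE x in M. 0 \<le> T (\<lambda>y. \<bar>f y\<bar> + f y) x"
    using f by (auto intro!: markov_operator_nonneg[OF T])
  with L1_operator_diff[OF L af f] L1_operator_add[OF L af f] show ?thesis
    by eventually_elim auto
qed

lemma markov_operator_L1_dist_le:
  assumes T: "markov_operator M T" and f: "integrable M f" and g: "integrable M g"
  shows "(\<integral>x. \<bar>T f x - T g x\<bar> \<partial>M) \<le> (\<integral>x. \<bar>f x - g x\<bar> \<partial>M)"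
proof -
  have L: "L1_operator M T" using T by (rule markov_operator_L1_operator)
  have fg: "integrable M (\<lambda>y. f y - g y)" and afg: "integrable M (\<lambda>y. \<bar>f y - g y\<bar>)"
    using f g by auto
  have "(\<integral>x. \<bar>T f x - T g x\<bar> \<partial>M) = (\<integral>x. \<bar>T (\<lambda>y. f y - g y) x\<bar> \<partial>M)"
    using L1_operator_diff[OF L f g] L1_operator_integrable[OF L f] L1_operator_integrable[OF L g]
      L1_operator_integrable[OF L fg]
    by (intro integral_cong_AE) auto
  also have "\<dots> \<le> (\<integral>x. T (\<lambda>y. \<bar>f y - g y\<bar>) x \<partial>M)"
    using markov_operator_abs_le[OF T fg]
    by (intro integral_mono_AE) (auto intro: L1_operator_integrable[OF L] fg afg)
  also have "\<dots> = (\<integral>x. \<bar>f x - g x\<bar> \<partial>M)"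
    by (rule markov_operator_integral[OF T afg])
  finally show ?thesis .
qed

lemma simple_L1_integrable: "f \<in> simple_L1 M \<Longrightarrow> integrable M f"
  unfolding simple_L1_def by blast

lemma simple_L1_iff_finite_support:
  "f \<in> simple_L1 M \<longleftrightarrow> simple_function M f \<and> emeasure M {y \<in> space M. f y \<noteq> 0} \<noteq> \<infinity>"
proof
  assume f: "f \<in> simple_L1 M"
  then have "simple_function M f" "(\<integral>\<^sup>+x. norm (f x) \<partial>M) < \<infinity>"
    unfolding simple_L1_def by (auto simp: integrable_iff_bounded)
  from simple_bochner_integrableI_bounded[OF this] show
    "simple_function M f \<and> emeasure M {y \<in> space M. f y \<noteq> 0} \<noteq> \<infinity>"
    by (auto elim: simple_bochner_integrable.cases)
qed (auto simp: simple_L1_def intro: integrable_simple_function)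

lemma simple_L1_linear:
  "f \<in> simple_L1 M \<Longrightarrow> g \<in> simple_L1 M \<Longrightarrow> (\<lambda>y. a * f y + b * g y) \<in> simple_L1 M"
  unfolding simple_L1_def by (auto intro!: simple_function_add simple_function_mult)

lemma simple_L1_indicator:
  "E \<in> sets M \<Longrightarrow> emeasure M E < \<infinity> \<Longrightarrow> (indicator E :: 'a \<Rightarrow> real) \<in> simple_L1 M"
  unfolding simple_L1_def by auto

lemma simple_L1_min:
  "f \<in> simple_L1 M \<Longrightarrow> g \<in> simple_L1 M \<Longrightarrow> (\<lambda>y. min (f y) (g y)) \<in> simple_L1 M"
  unfolding simple_L1_def by (auto intro!: simple_function_compose2[where h=min])

lemma simple_L1_max_0: "f \<in> simple_L1 M \<Longrightarrow> (\<lambda>y. max (f y) 0) \<in> simple_L1 M"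
  unfolding simple_L1_def by (auto intro!: simple_function_compose1[where g="\<lambda>t. max t 0"])

section \<open>Uniqueness of the extension\<close>

lemma dominated_tendsto_L1:
  fixes f :: "'a \<Rightarrow> real"
  assumes "integrable M f" "\<And>i. integrable M (s i)"
    and "\<And>x. x \<in> space M \<Longrightarrow> (\<lambda>i. s i x) \<longlonglongrightarrow> f x"
    and "\<And>i x. x \<in> space M \<Longrightarrow> \<bar>s i x\<bar> \<le> 2 * \<bar>f x\<bar>"
  shows "(\<lambda>i. \<integral>x. \<bar>f x - s i x\<bar> \<partial>M) \<longlonglongrightarrow> 0"
proof -
  have "(\<lambda>i. \<integral>x. \<bar>f x - s i x\<bar> \<partial>M) \<longlonglongrightarrow> (\<integral>x. \<bar>f x - f x\<bar> \<partial>M)"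
  proof (intro integral_dominated_convergence[where w="\<lambda>x. 3 * \<bar>f x\<bar>"] AE_I2)
    fix x i assume x: "x \<in> space M"
    show "(\<lambda>i. \<bar>f x - s i x\<bar>) \<longlonglongrightarrow> \<bar>f x - f x\<bar>"
      using assms(3)[OF x] by (intro tendsto_intros)
    show "norm \<bar>f x - s i x\<bar> \<le> 3 * \<bar>f x\<bar>"
      using assms(4)[OF x, of i] by simp
  qed (use assms(1,2) in auto)
  then show ?thesis by simp
qed

lemma markov_operators_L1_dist_le:
  assumes T1: "markov_operator M T1" and T2: "markov_operator M T2"
    and f: "integrable M f" and s: "integrable M s" and agree: "AE x in M. T1 s x = T2 s x"
  shows "(\<integral>x. \<bar>T1 f x - T2 f x\<bar> \<partial>M) \<le> 2 * (\<integral>x. \<bar>f x - s x\<bar> \<partial>M)"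
proof -
  have int: "integrable M (T1 f)" "integrable M (T2 f)" "integrable M (T1 s)" "integrable M (T2 s)"
    using f s T1 T2 by (auto intro: markov_operator_integrable)
  have "(\<integral>x. \<bar>T1 f x - T2 f x\<bar> \<partial>M) \<le> (\<integral>x. \<bar>T1 f x - T1 s x\<bar> + \<bar>T2 f x - T2 s x\<bar> \<partial>M)"
    using agree int by (intro integral_mono_AE) (auto elim!: eventually_mono)
  also have "\<dots> = (\<integral>x. \<bar>T1 f x - T1 s x\<bar> \<partial>M) + (\<integral>x. \<bar>T2 f x - T2 s x\<bar> \<partial>M)"
    using int by (intro Bochner_Integration.integral_add) auto
  also have "\<dots> \<le> 2 * (\<integral>x. \<bar>f x - s x\<bar> \<partial>M)"
    using markov_operator_L1_dist_le[OF T1 f s] markov_operator_L1_dist_le[OF T2 f s] by linarith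
  finally show ?thesis .
qed

lemma markov_extensions_unique:
  assumes T1: "markov_operator M T1" "extends_simple M S T1"
    and T2: "markov_operator M T2" "extends_simple M S T2"
    and f: "integrable M f"
  shows "AE x in M. T1 f x = T2 f x"
  using f
proof (induct rule: integrable_induct)
  case (base A c)
  have "(\<lambda>x. indicator A x *\<^sub>R c) = (\<lambda>y. c * indicator A y + 0 * indicator A y)"
    by (auto simp: fun_eq_iff)
  also have "\<dots> \<in> simple_L1 M"
    using base by (intro simple_L1_linear simple_L1_indicator)
  finally have "(\<lambda>x. indicator A x *\<^sub>R c) \<in> simple_L1 M" .
  with T1(2) T2(2) have "AE x in M. T1 (\<lambda>x. indicator A x *\<^sub>R c) x = S (\<lambda>x. indicator A x *\<^sub>R c) x"
    "AE x in M. T2 (\<lambda>x. indicator A x *\<^sub>R c) x = S (\<lambda>x. indicator A x *\<^sub>R c) x"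
    unfolding extends_simple_def by blast+
  then show ?case by eventually_elim simp
next
  case (add f g)
  from add(2,4) L1_operator_add[OF markov_operator_L1_operator[OF T1(1)] add(1,3)]
    L1_operator_add[OF markov_operator_L1_operator[OF T2(1)] add(1,3)]
  show ?case by eventually_elim auto
next
  case (lim f s)
  let ?d = "\<lambda>x. \<bar>T1 f x - T2 f x\<bar>"
  have "(\<lambda>i. 2 * (\<integral>x. \<bar>f x - s i x\<bar> \<partial>M)) \<longlonglongrightarrow> 2 * 0"
    using lim by (intro tendsto_mult tendsto_const dominated_tendsto_L1) auto
  then have "(\<integral>x. ?d x \<partial>M) \<le> 2 * 0"
    by (rule LIMSEQ_le_const) (use markov_operators_L1_dist_le[OF T1(1) T2(1) lim(5) lim(1) lim(2)] in blast)
  moreover have "integrable M ?d"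
    using markov_operator_integrable[OF T1(1) lim(5)] markov_operator_integrable[OF T2(1) lim(5)]
    by auto
  ultimately have "AE x in M. ?d x = 0"
    using integral_nonneg_eq_0_iff_AE[of M ?d] by (auto intro: order_antisym)
  then show ?case by eventually_elim auto
qed

section \<open>Extension of a positive map on simple functions\<close>

definition monotone_simple_approx :: "'a measure \<Rightarrow> ('a \<Rightarrow> real) \<Rightarrow> (nat \<Rightarrow> 'a \<Rightarrow> real) \<Rightarrow> bool"
  where "monotone_simple_approx M p u \<longleftrightarrow>
    (\<forall>k. u k \<in> simple_L1 M) \<and> (\<forall>k x. 0 \<le> u k x \<and> u k x \<le> u (Suc k) x) \<and>
    (AE x in M. (\<lambda>k. u k x) \<longlonglongrightarrow> p x)"

lemma monotone_simple_approxD: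
  assumes "monotone_simple_approx M p u"
  shows "u k \<in> simple_L1 M" "0 \<le> u k x" "incseq (\<lambda>k. u k x)" "AE x in M. (\<lambda>k. u k x) \<longlonglongrightarrow> p x"
  using assms unfolding monotone_simple_approx_def by (auto intro!: incseq_SucI)

lemma monotone_simple_approx_le:
  assumes "monotone_simple_approx M p u"
  shows "AE x in M. \<forall>k. u k x \<le> p x"
  using monotone_simple_approxD(4)[OF assms]
  by eventually_elim (auto intro: incseq_le monotone_simple_approxD(3)[OF assms])

lemma monotone_simple_approx_exists:
  assumes p: "integrable M p" and nonneg: "\<And>x. 0 \<le> p x"
  shows "\<exists>u. monotone_simple_approx M p u"
proof -
  have [measurable]: "p \<in> borel_measurable M" using p by auto
  obtain f where f: "\<And>i. simple_function M (f i)" "incseq f" "\<And>i x. f i x < top"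
    "\<And>x. (SUP i. f i x) = ennreal (p x)"
    using borel_measurable_implies_simple_function_sequence'[of "\<lambda>x. ennreal (p x)" M] by auto
  define u where "u k = (\<lambda>x. enn2real (f k x))" for k
  have f_le: "f k x \<le> ennreal (p x)" for k x using f(4)[of x] by (metis SUP_upper UNIV_I)
  have f_mono: "f k x \<le> f (Suc k) x" for k x using f(2) by (simp add: incseq_Suc_iff le_fun_def)
  have "u k \<in> simple_L1 M" for k
  proof -
    have s: "simple_function M (u k)" unfolding u_def by (rule simple_function_compose1[OF f(1)])
    moreover have "integrable M (u k)"
      using s f_le nonneg enn2real_mono[OF f_le]
      by (intro Bochner_Integration.integrable_bound[OF p])
         (auto intro: borel_measurable_simple_function simp: u_def)
    ultimately show ?thesis unfolding simple_L1_def by blast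
  qed
  moreover have "0 \<le> u k x \<and> u k x \<le> u (Suc k) x" for k x
    unfolding u_def using enn2real_mono[OF f_mono f(3)] by simp
  moreover have "(\<lambda>k. u k x) \<longlonglongrightarrow> p x" for x
  proof -
    have "incseq (\<lambda>k. f k x)" using f_mono by (simp add: incseq_Suc_iff)
    then have "(\<lambda>k. f k x) \<longlonglongrightarrow> ennreal (p x)" using LIMSEQ_SUP f(4)[of x] by metis
    then show ?thesis unfolding u_def by (intro tendsto_enn2real nonneg)
  qed
  ultimately show ?thesis unfolding monotone_simple_approx_def by blast
qed

lemma monotone_simple_approx_some:
  "integrable M p \<Longrightarrow> (\<And>x. 0 \<le> p x) \<Longrightarrow> monotone_simple_approx M p (SOME u. monotone_simple_approx M p u)"
  using someI_ex[OF monotone_simple_approx_exists] .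

lemma monotone_simple_approx_linear:
  assumes u: "monotone_simple_approx M p u" and v: "monotone_simple_approx M q v"
    and c: "0 \<le> c" and d: "0 \<le> d"
  shows "monotone_simple_approx M (\<lambda>y. c * p y + d * q y) (\<lambda>k y. c * u k y + d * v k y)"
  unfolding monotone_simple_approx_def
proof (intro conjI allI)
  show "(\<lambda>y. c * u k y + d * v k y) \<in> simple_L1 M" for k
    by (intro simple_L1_linear monotone_simple_approxD(1)[OF u] monotone_simple_approxD(1)[OF v])
  show "0 \<le> c * u k x + d * v k x" for k x
    using monotone_simple_approxD(2)[OF u] monotone_simple_approxD(2)[OF v] c d by simp
  show "c * u k x + d * v k x \<le> c * u (Suc k) x + d * v (Suc k) x" for k x
    using monotone_simple_approxD(3)[OF u, of x] monotone_simple_approxD(3)[OF v, of x] c d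
    by (intro add_mono mult_left_mono) (auto simp: incseq_Suc_iff)
  show "AE x in M. (\<lambda>k. c * u k x + d * v k x) \<longlonglongrightarrow> c * p x + d * q x"
    using monotone_simple_approxD(4)[OF u] monotone_simple_approxD(4)[OF v]
    by eventually_elim (auto intro!: tendsto_intros)
qed

lemma AE_INF_eq_0_of_integral_tendsto_0:
  fixes d :: "nat \<Rightarrow> 'a \<Rightarrow> real"
  assumes d: "\<And>k. integrable M (d k)" "\<And>k. AE x in M. 0 \<le> d k x"
    and lim: "(\<lambda>k. \<integral>x. d k x \<partial>M) \<longlonglongrightarrow> 0"
  shows "AE x in M. (INF k. ennreal (d k x)) = 0"
proof -
  have [measurable]: "\<And>k. d k \<in> borel_measurable M" using d(1) by auto
  have "(\<integral>\<^sup>+x. (INF k. ennreal (d k x)) \<partial>M) \<le> ennreal (\<integral>x. d k x \<partial>M)" for k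
  proof -
    have "(\<integral>\<^sup>+x. (INF k. ennreal (d k x)) \<partial>M) \<le> (\<integral>\<^sup>+x. ennreal (d k x) \<partial>M)"
      by (intro nn_integral_mono INF_lower) auto
    also have "\<dots> = ennreal (\<integral>x. d k x \<partial>M)"
      using d by (rule nn_integral_eq_integral)
    finally show ?thesis .
  qed
  moreover have "(\<lambda>k. ennreal (\<integral>x. d k x \<partial>M)) \<longlonglongrightarrow> 0"
    using tendsto_ennrealI[OF lim] by simp
  ultimately have "(\<integral>\<^sup>+x. (INF k. ennreal (d k x)) \<partial>M) \<le> 0"
    using LIMSEQ_le_const by blast
  then show ?thesis by (simp add: nn_integral_0_iff_AE)
qed

locale positive_simple_map =
  fixes M :: "'a measure" and S :: "('a \<Rightarrow> real) \<Rightarrow> 'a \<Rightarrow> real"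
  assumes linear_simple_map: "linear_simple_map M S"
    and nonneg: "\<And>f. f \<in> simple_L1 M \<Longrightarrow> AE x in M. 0 \<le> f x \<Longrightarrow> AE x in M. 0 \<le> S f x"
    and integral_indicator:
      "\<And>E. E \<in> sets M \<Longrightarrow> emeasure M E < \<infinity> \<Longrightarrow> (\<integral>x. S (indicator E) x \<partial>M) = measure M E"
begin

lemma integrable_S: "f \<in> simple_L1 M \<Longrightarrow> integrable M (S f)"
  using linear_simple_map unfolding linear_simple_map_def by blast

lemma borel_measurable_S [measurable]: "f \<in> simple_L1 M \<Longrightarrow> S f \<in> borel_measurable M"
  using integrable_S by auto

lemma S_AE_cong:
  "f \<in> simple_L1 M \<Longrightarrow> g \<in> simple_L1 M \<Longrightarrow> (AE x in M. f x = g x) \<Longrightarrow> AE x in M. S f x = S g x"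
  using linear_simple_map unfolding linear_simple_map_def by blast

lemma S_linear:
  "f \<in> simple_L1 M \<Longrightarrow> g \<in> simple_L1 M \<Longrightarrow>
    AE x in M. S (\<lambda>y. a * f y + b * g y) x = a * S f x + b * S g x"
  using linear_simple_map unfolding linear_simple_map_def by blast

lemma S_diff:
  "f \<in> simple_L1 M \<Longrightarrow> g \<in> simple_L1 M \<Longrightarrow> AE x in M. S (\<lambda>y. f y - g y) x = S f x - S g x"
  using S_linear[of f g 1 "-1"] by simp

lemma S_mono:
  assumes f: "f \<in> simple_L1 M" and g: "g \<in> simple_L1 M" and le: "AE x in M. f x \<le> g x"
  shows "AE x in M. S f x \<le> S g x"
proof -
  have "(\<lambda>y. g y - f y) \<in> simple_L1 M" using simple_L1_linear[OF g f, of 1 "-1"] by simp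
  then have "AE x in M. 0 \<le> S (\<lambda>y. g y - f y) x"
    using le by (intro nonneg) (auto elim: eventually_mono)
  with S_diff[OF g f] show ?thesis by eventually_elim auto
qed

lemma integral_S:
  assumes "f \<in> simple_L1 M"
  shows "(\<integral>x. S f x \<partial>M) = (\<integral>x. f x \<partial>M)"
proof -
  from assms have "simple_function M f" "emeasure M {y \<in> space M. f y \<noteq> 0} \<noteq> \<infinity>"
    by (auto simp: simple_L1_iff_finite_support)
  then show ?thesis
  proof (induct rule: integrable_simple_function_induct)
    case (cong f g)
    then have f: "f \<in> simple_L1 M" and g: "g \<in> simple_L1 M"
      by (auto simp: simple_L1_iff_finite_support)
    have "(\<integral>x. S g x \<partial>M) = (\<integral>x. S f x \<partial>M)"
      using S_AE_cong[OF f g] cong(5) f g by (intro integral_cong_AE) auto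
    also have "\<dots> = (\<integral>x. g x \<partial>M)"
      using cong by (auto intro: Bochner_Integration.integral_cong)
    finally show ?case .
  next
    case (indicator A y)
    then have A: "(indicator A :: 'a \<Rightarrow> real) \<in> simple_L1 M" by (intro simple_L1_indicator) auto
    have "(\<integral>x. S (\<lambda>x. indicator A x *\<^sub>R y) x \<partial>M) = (\<integral>x. y * S (indicator A) x \<partial>M)"
      using S_linear[OF A A, of y 0] simple_L1_linear[OF A A, of y 0] A
      by (intro integral_cong_AE) (auto simp: mult.commute)
    also have "\<dots> = (\<integral>x. indicator A x *\<^sub>R y \<partial>M)"
      using integral_indicator[of A] indicator by simp
    finally show ?case .
  next
    case (add f g)
    then have f: "f \<in> simple_L1 M" and g: "g \<in> simple_L1 M"
      by (auto simp: simple_L1_iff_finite_support)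
    have "(\<integral>x. S (\<lambda>x. f x + g x) x \<partial>M) = (\<integral>x. S f x + S g x \<partial>M)"
      using S_linear[OF f g, of 1 1] simple_L1_linear[OF f g, of 1 1] f g
      by (intro integral_cong_AE) (auto intro: integrable_S)
    also have "\<dots> = (\<integral>x. f x + g x \<partial>M)"
      using add f g by (simp add: integrable_S simple_L1_integrable)
    finally show ?case .
  qed
qed

definition S_SUP :: "(nat \<Rightarrow> 'a \<Rightarrow> real) \<Rightarrow> 'a \<Rightarrow> ennreal"
  where "S_SUP u x = (SUP k. ennreal (S (u k) x))"

lemma borel_measurable_S_SUP [measurable]:
  "monotone_simple_approx M p u \<Longrightarrow> S_SUP u \<in> borel_measurable M"
  unfolding S_SUP_def[abs_def] using monotone_simple_approxD(1) by measurable

lemma AE_S_approx_incseq: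
  assumes u: "monotone_simple_approx M p u"
  shows "AE x in M. \<forall>k. 0 \<le> S (u k) x \<and> S (u k) x \<le> S (u (Suc k)) x"
proof -
  have "AE x in M. \<forall>k. 0 \<le> S (u k) x"
    unfolding AE_all_countable
    by (intro allI nonneg monotone_simple_approxD(1)[OF u] AE_I2 monotone_simple_approxD(2)[OF u])
  moreover have "AE x in M. \<forall>k. S (u k) x \<le> S (u (Suc k)) x"
    unfolding AE_all_countable using u unfolding monotone_simple_approx_def
    by (intro allI S_mono AE_I2) auto
  ultimately show ?thesis by eventually_elim auto
qed

lemma nn_integral_S_SUP:
  assumes u: "monotone_simple_approx M p u" and [measurable]: "p \<in> borel_measurable M"
  shows "(\<integral>\<^sup>+x. S_SUP u x \<partial>M) = (\<integral>\<^sup>+x. ennreal (p x) \<partial>M)"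
proof -
  note u_simple = monotone_simple_approxD(1)[OF u]
  have [measurable]: "\<And>k. u k \<in> borel_measurable M"
    using u_simple by (auto dest: simple_L1_integrable)
  have "(\<integral>\<^sup>+x. S_SUP u x \<partial>M) = (SUP k. \<integral>\<^sup>+x. ennreal (S (u k) x) \<partial>M)"
    unfolding S_SUP_def using AE_S_approx_incseq[OF u] u_simple
    by (intro nn_integral_monotone_convergence_SUP_AE) (auto elim!: eventually_mono)
  also have "\<dots> = (SUP k. \<integral>\<^sup>+x. ennreal (u k x) \<partial>M)"
  proof (rule SUP_cong[OF refl])
    fix k
    have "(\<integral>\<^sup>+x. ennreal (S (u k) x) \<partial>M) = ennreal (\<integral>x. S (u k) x \<partial>M)"
      using integrable_S[OF u_simple] AE_S_approx_incseq[OF u] by (intro nn_integral_eq_integral) auto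
    also have "\<dots> = (\<integral>\<^sup>+x. ennreal (u k x) \<partial>M)"
      using integral_S[OF u_simple] simple_L1_integrable[OF u_simple] monotone_simple_approxD(2)[OF u]
      by (simp add: nn_integral_eq_integral)
    finally show "(\<integral>\<^sup>+x. ennreal (S (u k) x) \<partial>M) = (\<integral>\<^sup>+x. ennreal (u k x) \<partial>M)" .
  qed
  also have "\<dots> = (\<integral>\<^sup>+x. (SUP k. ennreal (u k x)) \<partial>M)"
    using monotone_simple_approxD(3)[OF u]
    by (intro nn_integral_monotone_convergence_SUP_AE[symmetric])
       (auto simp: incseq_Suc_iff intro!: AE_I2 ennreal_leI)
  also have "\<dots> = (\<integral>\<^sup>+x. ennreal (p x) \<partial>M)"
  proof (rule nn_integral_cong_AE)
    show "AE x in M. (SUP k. ennreal (u k x)) = ennreal (p x)"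
      using monotone_simple_approxD(4)[OF u]
    proof eventually_elim
      case (elim x)
      have "incseq (\<lambda>k. ennreal (u k x))"
        using monotone_simple_approxD(3)[OF u, of x] by (auto simp: incseq_def ennreal_leI)
      from LIMSEQ_unique[OF LIMSEQ_SUP[OF this] tendsto_ennrealI[OF elim]] show ?case .
    qed
  qed
  finally show ?thesis .
qed

lemma AE_INF_S_min_gap_eq_0:
  assumes u: "monotone_simple_approx M p u" and v: "monotone_simple_approx M p v"
  shows "AE x in M. (INF k. ennreal (S (u j) x - S (\<lambda>y. min (v k y) (u j y)) x)) = 0"
proof -
  define w where "w k = (\<lambda>y. min (v k y) (u j y))" for k
  have uj: "u j \<in> simple_L1 M" using monotone_simple_approxD(1)[OF u] .
  have wk: "w k \<in> simple_L1 M" for k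
    unfolding w_def by (intro simple_L1_min monotone_simple_approxD(1)[OF v] uj)
  have "(\<lambda>k. \<integral>x. w k x \<partial>M) \<longlonglongrightarrow> (\<integral>x. u j x \<partial>M)"
  proof (rule integral_dominated_convergence[where w="\<lambda>x. \<bar>u j x\<bar>"])
    show "AE x in M. (\<lambda>k. w k x) \<longlonglongrightarrow> u j x"
      using monotone_simple_approxD(4)[OF v] monotone_simple_approx_le[OF u]
    proof eventually_elim
      case (elim x)
      then have "(\<lambda>k. min (v k x) (u j x)) \<longlonglongrightarrow> min (p x) (u j x)" by (intro tendsto_intros)
      with elim(2) show ?case by (simp add: w_def min_absorb2)
    qed
    show "AE x in M. norm (w k x) \<le> \<bar>u j x\<bar>" for k
      using monotone_simple_approxD(2)[OF v] monotone_simple_approxD(2)[OF u] by (auto simp: w_def)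
  qed (use uj wk in \<open>auto dest: simple_L1_integrable\<close>)
  then have "(\<lambda>k. \<integral>x. u j x \<partial>M - \<integral>x. w k x \<partial>M) \<longlonglongrightarrow> \<integral>x. u j x \<partial>M - \<integral>x. u j x \<partial>M"
    by (intro tendsto_intros)
  moreover have "(\<integral>x. S (u j) x - S (w k) x \<partial>M) = (\<integral>x. u j x \<partial>M) - (\<integral>x. w k x \<partial>M)" for k
    using integrable_S[OF uj] integrable_S[OF wk] integral_S[OF uj] integral_S[OF wk] by simp
  moreover have "AE x in M. 0 \<le> S (u j) x - S (w k) x" for k
    using S_mono[OF wk uj] by (auto simp: w_def elim!: eventually_mono)
  ultimately show ?thesis
    using integrable_S[OF uj] integrable_S[OF wk] unfolding w_def[symmetric]
    by (intro AE_INF_eq_0_of_integral_tendsto_0) auto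
qed

lemma S_le_S_SUP:
  assumes u: "monotone_simple_approx M p u" and v: "monotone_simple_approx M p v"
  shows "AE x in M. ennreal (S (u j) x) \<le> S_SUP v x"
proof -
  define w where "w k = (\<lambda>y. min (v k y) (u j y))" for k
  have uj: "u j \<in> simple_L1 M" using monotone_simple_approxD(1)[OF u] .
  have wk: "w k \<in> simple_L1 M" for k
    unfolding w_def by (intro simple_L1_min monotone_simple_approxD(1)[OF v] uj)
  have "AE x in M. 0 \<le> S (w k) x \<and> S (w k) x \<le> S (v k) x \<and> S (w k) x \<le> S (u j) x" for k
  proof -
    have "AE x in M. 0 \<le> S (w k) x"
      using monotone_simple_approxD(2)[OF u] monotone_simple_approxD(2)[OF v]
      by (intro nonneg wk AE_I2) (auto simp: w_def)
    moreover have "AE x in M. S (w k) x \<le> S (v k) x" "AE x in M. S (w k) x \<le> S (u j) x"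
      by (intro S_mono wk uj monotone_simple_approxD(1)[OF v] AE_I2; simp add: w_def)+
    ultimately show ?thesis by eventually_elim simp
  qed
  then have "AE x in M. \<forall>k. 0 \<le> S (w k) x \<and> S (w k) x \<le> S (v k) x \<and> S (w k) x \<le> S (u j) x"
    unfolding AE_all_countable by blast
  with AE_INF_S_min_gap_eq_0[OF u v, of j] show ?thesis
    unfolding w_def[symmetric]
  proof eventually_elim
    case (elim x)
    have "ennreal (S (u j) x) \<le> S_SUP v x + ennreal (S (u j) x - S (w k) x)" for k
    proof -
      have "ennreal (S (w k) x) \<le> S_SUP v x"
        unfolding S_SUP_def using elim(2) by (intro SUP_upper2[of k]) (auto intro: ennreal_leI)
      moreover have "ennreal (S (u j) x) = ennreal (S (w k) x) + ennreal (S (u j) x - S (w k) x)"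
        using elim(2) by (simp flip: ennreal_plus)
      ultimately show ?thesis by (simp add: add_right_mono)
    qed
    then have "ennreal (S (u j) x) \<le> (INF k. S_SUP v x + ennreal (S (u j) x - S (w k) x))"
      by (rule INF_greatest)
    also have "\<dots> = S_SUP v x" by (simp add: INF_ennreal_const_add elim(1))
    finally show ?case .
  qed
qed

lemma S_SUP_AE_unique:
  assumes u: "monotone_simple_approx M p u" and v: "monotone_simple_approx M p v"
  shows "AE x in M. S_SUP u x = S_SUP v x"
proof -
  have "AE x in M. \<forall>j. ennreal (S (u j) x) \<le> S_SUP v x" "AE x in M. \<forall>j. ennreal (S (v j) x) \<le> S_SUP u x"
    unfolding AE_all_countable using S_le_S_SUP[OF u v] S_le_S_SUP[OF v u] by blast+
  then show ?thesis
    by eventually_elim (auto simp: S_SUP_def intro: antisym SUP_least)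
qed

text \<open>By \<open>S_SUP_AE_unique\<close> the chosen approximating sequence is irrelevant a.e.; \<open>enn2real\<close>
  sends the null set where the supremum is infinite to \<open>0\<close>.\<close>

definition S_nonneg_ext :: "('a \<Rightarrow> real) \<Rightarrow> 'a \<Rightarrow> real"
  where "S_nonneg_ext p x = enn2real (S_SUP (SOME u. monotone_simple_approx M p u) x)"

lemma S_nonneg_ext_nonneg: "0 \<le> S_nonneg_ext p x"
  unfolding S_nonneg_ext_def by simp

lemma S_SUP_eq_S_nonneg_ext:
  assumes p: "integrable M p" "\<And>x. 0 \<le> p x" and u: "monotone_simple_approx M p u"
  shows "AE x in M. S_SUP u x = ennreal (S_nonneg_ext p x)"
proof -
  define v where "v = (SOME u. monotone_simple_approx M p u)"
  have v: "monotone_simple_approx M p v"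
    unfolding v_def using p by (rule monotone_simple_approx_some)
  have "(\<integral>\<^sup>+x. S_SUP v x \<partial>M) = ennreal (\<integral>x. p x \<partial>M)"
    using p by (simp add: nn_integral_S_SUP[OF v] nn_integral_eq_integral)
  then have "AE x in M. S_SUP v x \<noteq> \<infinity>"
    using v by (intro nn_integral_PInf_AE) auto
  with S_SUP_AE_unique[OF u v] show ?thesis
    by eventually_elim (simp add: S_nonneg_ext_def v_def[symmetric] ennreal_enn2real_if)
qed

lemma nn_integral_S_nonneg_ext:
  assumes p: "integrable M p" "\<And>x. 0 \<le> p x"
  shows "(\<integral>\<^sup>+x. ennreal (S_nonneg_ext p x) \<partial>M) = ennreal (\<integral>x. p x \<partial>M)"
proof -
  have u: "monotone_simple_approx M p (SOME u. monotone_simple_approx M p u)"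
    using p by (rule monotone_simple_approx_some)
  have "(\<integral>\<^sup>+x. ennreal (S_nonneg_ext p x) \<partial>M) = (\<integral>\<^sup>+x. S_SUP (SOME u. monotone_simple_approx M p u) x \<partial>M)"
    using S_SUP_eq_S_nonneg_ext[OF p u] by (intro nn_integral_cong_AE) auto
  also have "\<dots> = ennreal (\<integral>x. p x \<partial>M)"
    using p by (simp add: nn_integral_S_SUP[OF u] nn_integral_eq_integral)
  finally show ?thesis .
qed

lemma borel_measurable_S_nonneg_ext [measurable]:
  "integrable M p \<Longrightarrow> (\<And>x. 0 \<le> p x) \<Longrightarrow> S_nonneg_ext p \<in> borel_measurable M"
  unfolding S_nonneg_ext_def[abs_def] using monotone_simple_approx_some by measurable

lemma integrable_S_nonneg_ext:
  "integrable M p \<Longrightarrow> (\<And>x. 0 \<le> p x) \<Longrightarrow> integrable M (S_nonneg_ext p)"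
  by (intro integrableI_nonneg) (auto simp: nn_integral_S_nonneg_ext S_nonneg_ext_nonneg)

lemma integral_S_nonneg_ext:
  assumes p: "integrable M p" "\<And>x. 0 \<le> p x"
  shows "(\<integral>x. S_nonneg_ext p x \<partial>M) = (\<integral>x. p x \<partial>M)"
proof -
  have "ennreal (\<integral>x. S_nonneg_ext p x \<partial>M) = ennreal (\<integral>x. p x \<partial>M)"
    using nn_integral_S_nonneg_ext[OF p] integrable_S_nonneg_ext[OF p]
    by (simp add: nn_integral_eq_integral S_nonneg_ext_nonneg)
  then show ?thesis
    using p by (simp add: integral_nonneg_AE S_nonneg_ext_nonneg)
qed

lemma S_nonneg_ext_AE_cong:
  assumes p: "integrable M p" "\<And>x. 0 \<le> p x" and q: "integrable M q" "\<And>x. 0 \<le> q x"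
    and eq: "AE x in M. p x = q x"
  shows "AE x in M. S_nonneg_ext p x = S_nonneg_ext q x"
proof -
  have u: "monotone_simple_approx M p (SOME u. monotone_simple_approx M p u)"
    using p by (rule monotone_simple_approx_some)
  then have "monotone_simple_approx M q (SOME u. monotone_simple_approx M p u)"
    using eq unfolding monotone_simple_approx_def by (auto elim: AE_mp)
  from S_SUP_eq_S_nonneg_ext[OF q this] S_SUP_eq_S_nonneg_ext[OF p u] show ?thesis
    by eventually_elim (simp add: S_nonneg_ext_nonneg)
qed

lemma S_nonneg_ext_simple:
  assumes f: "f \<in> simple_L1 M" and nonneg_f: "\<And>x. 0 \<le> f x"
  shows "AE x in M. S_nonneg_ext f x = S f x"
proof -
  have "monotone_simple_approx M f (\<lambda>k. f)"
    unfolding monotone_simple_approx_def using f nonneg_f by auto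
  from S_SUP_eq_S_nonneg_ext[OF simple_L1_integrable[OF f] nonneg_f this]
    nonneg[OF f AE_I2[OF nonneg_f]]
  show ?thesis
    by eventually_elim (auto simp: S_SUP_def nonneg_f S_nonneg_ext_nonneg)
qed

lemma S_SUP_linear:
  assumes u: "monotone_simple_approx M p u" and v: "monotone_simple_approx M q v"
    and c: "0 \<le> c" and d: "0 \<le> d"
  shows "AE x in M. S_SUP (\<lambda>k y. c * u k y + d * v k y) x = ennreal c * S_SUP u x + ennreal d * S_SUP v x"
proof -
  have "AE x in M. \<forall>k. S (\<lambda>y. c * u k y + d * v k y) x = c * S (u k) x + d * S (v k) x"
    unfolding AE_all_countable
    by (intro allI S_linear monotone_simple_approxD(1)[OF u] monotone_simple_approxD(1)[OF v])
  with AE_S_approx_incseq[OF u] AE_S_approx_incseq[OF v] show ?thesis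
  proof eventually_elim
    case (elim x)
    have "incseq (\<lambda>k. ennreal c * ennreal (S (u k) x))" "incseq (\<lambda>k. ennreal d * ennreal (S (v k) x))"
      using elim(1,2) by (auto simp: incseq_Suc_iff intro!: mult_left_mono ennreal_leI)
    note SUP_add = ennreal_SUP_add[OF this]
    have "S_SUP (\<lambda>k y. c * u k y + d * v k y) x
        = (SUP k. ennreal c * ennreal (S (u k) x) + ennreal d * ennreal (S (v k) x))"
      unfolding S_SUP_def elim(3)[rule_format] using elim(1,2) c d
      by (intro SUP_cong refl) (simp add: ennreal_plus[symmetric] ennreal_mult[symmetric] del: ennreal_plus)
    also have "\<dots> = ennreal c * S_SUP u x + ennreal d * S_SUP v x"
      unfolding SUP_add S_SUP_def by (simp add: SUP_mult_left_ennreal)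
    finally show ?case .
  qed
qed

lemma S_nonneg_ext_linear:
  assumes p: "integrable M p" "\<And>x. 0 \<le> p x" and q: "integrable M q" "\<And>x. 0 \<le> q x"
    and c: "0 \<le> c" and d: "0 \<le> d"
  shows "AE x in M. S_nonneg_ext (\<lambda>y. c * p y + d * q y) x = c * S_nonneg_ext p x + d * S_nonneg_ext q x"
proof -
  define u where "u = (SOME u. monotone_simple_approx M p u)"
  define v where "v = (SOME v. monotone_simple_approx M q v)"
  have u: "monotone_simple_approx M p u" unfolding u_def using p by (rule monotone_simple_approx_some)
  have v: "monotone_simple_approx M q v" unfolding v_def using q by (rule monotone_simple_approx_some)
  have pq: "integrable M (\<lambda>y. c * p y + d * q y)" "\<And>x. 0 \<le> c * p x + d * q x"
    using p q c d by auto
  from S_SUP_eq_S_nonneg_ext[OF pq monotone_simple_approx_linear[OF u v c d]] S_SUP_linear[OF u v c d]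
    S_SUP_eq_S_nonneg_ext[OF p u] S_SUP_eq_S_nonneg_ext[OF q v]
  show ?thesis
  proof eventually_elim
    case (elim x)
    then have "ennreal (S_nonneg_ext (\<lambda>y. c * p y + d * q y) x)
        = ennreal (c * S_nonneg_ext p x + d * S_nonneg_ext q x)"
      using c d S_nonneg_ext_nonneg
      by (simp add: ennreal_plus[symmetric] ennreal_mult[symmetric] del: ennreal_plus)
    then show ?case
      using c d by (simp add: S_nonneg_ext_nonneg flip: ennreal_plus del: ennreal_plus)
  qed
qed

lemma S_nonneg_ext_add:
  assumes "integrable M p" "\<And>x. 0 \<le> p x" "integrable M q" "\<And>x. 0 \<le> q x"
  shows "AE x in M. S_nonneg_ext (\<lambda>y. p y + q y) x = S_nonneg_ext p x + S_nonneg_ext q x"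
  using S_nonneg_ext_linear[OF assms zero_le_one zero_le_one] by simp

lemma S_nonneg_ext_cmult:
  assumes "integrable M p" "\<And>x. 0 \<le> p x" "0 \<le> c"
  shows "AE x in M. S_nonneg_ext (\<lambda>y. c * p y) x = c * S_nonneg_ext p x"
  using S_nonneg_ext_linear[OF assms(1,2) assms(1,2) assms(3) order_refl] by simp

definition S_ext :: "('a \<Rightarrow> real) \<Rightarrow> 'a \<Rightarrow> real"
  where "S_ext f x = S_nonneg_ext (\<lambda>y. max (f y) 0) x - S_nonneg_ext (\<lambda>y. max (- f y) 0) x"

lemma integrable_S_ext: "integrable M f \<Longrightarrow> integrable M (S_ext f)"
  unfolding S_ext_def[abs_def] by (intro Bochner_Integration.integrable_diff integrable_S_nonneg_ext) auto

lemma S_ext_diff: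
  assumes p: "integrable M p" "\<And>x. 0 \<le> p x" and q: "integrable M q" "\<And>x. 0 \<le> q x"
  shows "AE x in M. S_ext (\<lambda>y. p y - q y) x = S_nonneg_ext p x - S_nonneg_ext q x"
proof -
  let ?P = "\<lambda>y. max (p y - q y) 0" and ?N = "\<lambda>y. max (- (p y - q y)) 0"
  have P: "integrable M ?P" "\<And>x. 0 \<le> ?P x" and N: "integrable M ?N" "\<And>x. 0 \<le> ?N x"
    using p q by auto
  have "(\<lambda>y. ?P y + q y) = (\<lambda>y. ?N y + p y)" by (auto simp: fun_eq_iff max_def)
  from S_nonneg_ext_add[OF P q, unfolded this] S_nonneg_ext_add[OF N p] show ?thesis
    unfolding S_ext_def by eventually_elim simp
qed

lemma S_ext_add:
  assumes f: "integrable M f" and g: "integrable M g"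
  shows "AE x in M. S_ext (\<lambda>y. f y + g y) x = S_ext f x + S_ext g x"
proof -
  let ?fP = "\<lambda>y. max (f y) 0" and ?fN = "\<lambda>y. max (- f y) 0"
  let ?gP = "\<lambda>y. max (g y) 0" and ?gN = "\<lambda>y. max (- g y) 0"
  have fP: "integrable M ?fP" "\<And>x. 0 \<le> ?fP x" and fN: "integrable M ?fN" "\<And>x. 0 \<le> ?fN x"
    and gP: "integrable M ?gP" "\<And>x. 0 \<le> ?gP x" and gN: "integrable M ?gN" "\<And>x. 0 \<le> ?gN x"
    using f g by auto
  have PP: "integrable M (\<lambda>y. ?fP y + ?gP y)" "\<And>x. 0 \<le> ?fP x + ?gP x"
    and NN: "integrable M (\<lambda>y. ?fN y + ?gN y)" "\<And>x. 0 \<le> ?fN x + ?gN x"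
    using fP gP fN gN by (auto intro: add_nonneg_nonneg)
  have "(\<lambda>y. (?fP y + ?gP y) - (?fN y + ?gN y)) = (\<lambda>y. f y + g y)"
    by (auto simp: fun_eq_iff max_def)
  from S_ext_diff[OF PP NN, unfolded this] S_nonneg_ext_add[OF fP gP] S_nonneg_ext_add[OF fN gN] show ?thesis
    unfolding S_ext_def by eventually_elim simp
qed

lemma S_ext_cmult:
  assumes f: "integrable M f"
  shows "AE x in M. S_ext (\<lambda>y. c * f y) x = c * S_ext f x"
proof -
  let ?P = "\<lambda>y. max (f y) 0" and ?N = "\<lambda>y. max (- f y) 0"
  have P: "integrable M ?P" "\<And>x. 0 \<le> ?P x" and N: "integrable M ?N" "\<And>x. 0 \<le> ?N x"
    using f by auto
  show ?thesis
  proof (cases "0 \<le> c")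
    case True
    have cP: "integrable M (\<lambda>y. c * ?P y)" "\<And>x. 0 \<le> c * ?P x"
      and cN: "integrable M (\<lambda>y. c * ?N y)" "\<And>x. 0 \<le> c * ?N x"
      using P N True by auto
    have "(\<lambda>y. c * ?P y - c * ?N y) = (\<lambda>y. c * f y)"
      by (auto simp: fun_eq_iff max_def algebra_simps)
    from S_ext_diff[OF cP cN, unfolded this]
      S_nonneg_ext_cmult[OF P True] S_nonneg_ext_cmult[OF N True]
    show ?thesis unfolding S_ext_def by eventually_elim (simp add: algebra_simps)
  next
    case False
    then have c: "0 \<le> - c" by simp
    have cP: "integrable M (\<lambda>y. - c * ?P y)" "\<And>x. 0 \<le> - c * ?P x"
      and cN: "integrable M (\<lambda>y. - c * ?N y)" "\<And>x. 0 \<le> - c * ?N x"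
      using P N c by (auto simp: mult_nonpos_nonneg)
    have "(\<lambda>y. - c * ?N y - - c * ?P y) = (\<lambda>y. c * f y)"
      by (auto simp: fun_eq_iff max_def algebra_simps)
    from S_ext_diff[OF cN cP, unfolded this]
      S_nonneg_ext_cmult[OF P c] S_nonneg_ext_cmult[OF N c]
    show ?thesis unfolding S_ext_def by eventually_elim (simp add: algebra_simps)
  qed
qed

lemma S_ext_AE_cong:
  assumes f: "integrable M f" and g: "integrable M g" and eq: "AE x in M. f x = g x"
  shows "AE x in M. S_ext f x = S_ext g x"
proof -
  have eqs: "AE x in M. max (f x) 0 = max (g x) 0" "AE x in M. max (- f x) 0 = max (- g x) 0"
    using eq by (auto elim: eventually_mono)
  have ints: "integrable M (\<lambda>y. max (f y) 0)" "integrable M (\<lambda>y. max (g y) 0)"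
    "integrable M (\<lambda>y. max (- f y) 0)" "integrable M (\<lambda>y. max (- g y) 0)"
    using f g by auto
  from S_nonneg_ext_AE_cong[OF ints(1) max.cobounded2 ints(2) max.cobounded2 eqs(1)]
    S_nonneg_ext_AE_cong[OF ints(3) max.cobounded2 ints(4) max.cobounded2 eqs(2)]
  show ?thesis
    unfolding S_ext_def by eventually_elim simp
qed

lemma S_ext_nonneg:
  assumes f: "integrable M f" and nonneg_f: "AE x in M. 0 \<le> f x"
  shows "AE x in M. 0 \<le> S_ext f x"
proof -
  have "AE x in M. max (- f x) 0 = 0" using nonneg_f by (auto elim: eventually_mono)
  with f have "AE x in M. S_nonneg_ext (\<lambda>y. max (- f y) 0) x = S_nonneg_ext (\<lambda>_. 0) x"
    by (intro S_nonneg_ext_AE_cong) auto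
  moreover have "AE x in M. S_nonneg_ext (\<lambda>_. 0) x = 0"
    using S_nonneg_ext_cmult[of "\<lambda>_. 0" 0] by simp
  ultimately show ?thesis
    unfolding S_ext_def by eventually_elim (simp add: S_nonneg_ext_nonneg)
qed

lemma integral_S_ext:
  assumes f: "integrable M f"
  shows "(\<integral>x. S_ext f x \<partial>M) = (\<integral>x. f x \<partial>M)"
proof -
  have "(\<integral>x. S_ext f x \<partial>M) = (\<integral>x. max (f x) 0 \<partial>M) - (\<integral>x. max (- f x) 0 \<partial>M)"
    using f unfolding S_ext_def by (simp add: integrable_S_nonneg_ext integral_S_nonneg_ext)
  also have "\<dots> = (\<integral>x. max (f x) 0 - max (- f x) 0 \<partial>M)"
    using f by simp
  also have "\<dots> = (\<integral>x. f x \<partial>M)"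
    by (intro Bochner_Integration.integral_cong) (auto simp: max_def)
  finally show ?thesis .
qed

lemma S_ext_markov: "markov_operator M S_ext"
  unfolding markov_operator_def L1_operator_def
proof (intro conjI allI impI)
  fix f g :: "'a \<Rightarrow> real" and a b
  assume f: "integrable M f" and g: "integrable M g"
  have "integrable M (\<lambda>y. a * f y)" "integrable M (\<lambda>y. b * g y)" using f g by auto
  from S_ext_add[OF this] S_ext_cmult[OF f, of a] S_ext_cmult[OF g, of b]
  show "AE x in M. S_ext (\<lambda>y. a * f y + b * g y) x = a * S_ext f x + b * S_ext g x"
    by eventually_elim simp
qed (simp_all add: integrable_S_ext S_ext_AE_cong S_ext_nonneg integral_S_ext)

lemma S_ext_extends: "extends_simple M S S_ext"
  unfolding extends_simple_def
proof
  fix f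
  assume f: "f \<in> simple_L1 M"
  have P: "(\<lambda>y. max (f y) 0) \<in> simple_L1 M" by (rule simple_L1_max_0[OF f])
  have "(\<lambda>y. max ((-1) * f y + 0 * f y) 0) \<in> simple_L1 M"
    by (intro simple_L1_max_0 simple_L1_linear f)
  then have N: "(\<lambda>y. max (- f y) 0) \<in> simple_L1 M" by simp
  have "(\<lambda>y. max (f y) 0 - max (- f y) 0) = f" by (auto simp: fun_eq_iff max_def)
  from S_diff[OF P N, unfolded this] S_nonneg_ext_simple[OF P max.cobounded2] S_nonneg_ext_simple[OF N max.cobounded2]
  show "AE x in M. S_ext f x = S f x"
    unfolding S_ext_def by eventually_elim auto
qed

end

section \<open>The adjoint of a Markov operator on an indicator\<close>

lemma integrable_mult_bounded:
  fixes f g :: "'a \<Rightarrow> real"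
  assumes f: "integrable M f" and g: "g \<in> borel_measurable M" and bound: "AE x in M. \<bar>g x\<bar> \<le> C"
  shows "integrable M (\<lambda>x. f x * g x)"
proof (rule Bochner_Integration.integrable_bound[where f="\<lambda>x. \<bar>C\<bar> * f x"])
  show "AE x in M. norm (f x * g x) \<le> norm (\<bar>C\<bar> * f x)"
    using bound
  proof eventually_elim
    case (elim x)
    then have "\<bar>g x\<bar> \<le> \<bar>C\<bar>" by linarith
    from mult_left_mono[OF this abs_ge_zero[of "f x"]] show ?case by (simp add: abs_mult mult.commute)
  qed
qed (use f g in auto)

lemma dominated_tendsto_integral_mult_bounded:
  fixes f g :: "'a \<Rightarrow> real"
  assumes "integrable M f" "\<And>i. integrable M (s i)"
    and "\<And>x. x \<in> space M \<Longrightarrow> (\<lambda>i. s i x) \<longlonglongrightarrow> f x"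
    and "\<And>i x. x \<in> space M \<Longrightarrow> \<bar>s i x\<bar> \<le> 2 * \<bar>f x\<bar>"
    and g: "g \<in> borel_measurable M" "AE x in M. \<bar>g x\<bar> \<le> C"
  shows "(\<lambda>i. \<integral>x. s i x * g x \<partial>M) \<longlonglongrightarrow> (\<integral>x. f x * g x \<partial>M)"
proof (rule integral_dominated_convergence[where w="\<lambda>x. 2 * \<bar>f x\<bar> * \<bar>C\<bar>"])
  show "AE x in M. norm (s i x * g x) \<le> 2 * \<bar>f x\<bar> * \<bar>C\<bar>" for i
    using g(2) AE_space
  proof eventually_elim
    case (elim x)
    have "\<bar>s i x\<bar> \<le> 2 * \<bar>f x\<bar>" using assms(4)[OF elim(2)] .
    from mult_mono[OF this order_trans[OF elim(1) abs_ge_self]] show ?case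
      by (simp add: abs_mult)
  qed
qed (use assms in \<open>auto intro!: tendsto_intros\<close>)

lemma markov_operator_pairing_dist_le:
  assumes T: "markov_operator M T" and E: "E \<in> sets M" and f: "integrable M f" and g: "integrable M g"
  shows "\<bar>(\<integral>x. T g x * indicator E x \<partial>M) - (\<integral>x. T f x * indicator E x \<partial>M)\<bar> \<le> (\<integral>x. \<bar>f x - g x\<bar> \<partial>M)"
proof -
  have int: "integrable M (T f)" "integrable M (T g)"
    "integrable M (\<lambda>x. T f x * indicator E x)" "integrable M (\<lambda>x. T g x * indicator E x)"
    using f g E by (auto intro: markov_operator_integrable[OF T] integrable_real_mult_indicator)
  then have "\<bar>(\<integral>x. T g x * indicator E x \<partial>M) - (\<integral>x. T f x * indicator E x \<partial>M)\<bar>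
      = \<bar>\<integral>x. (T g x - T f x) * indicator E x \<partial>M\<bar>"
    by (simp add: left_diff_distrib)
  also have "\<dots> \<le> (\<integral>x. \<bar>(T g x - T f x) * indicator E x\<bar> \<partial>M)"
    by (rule integral_abs_bound)
  also have "\<dots> \<le> (\<integral>x. \<bar>T f x - T g x\<bar> \<partial>M)"
    using int by (intro integral_mono) (auto simp: indicator_def left_diff_distrib)
  also have "\<dots> \<le> (\<integral>x. \<bar>f x - g x\<bar> \<partial>M)"
    by (rule markov_operator_L1_dist_le[OF T f g])
  finally show ?thesis .
qed

text \<open>Simple functions are dense in \<open>L\<^sup>1\<close> and \<open>T\<close> is an \<open>L\<^sup>1\<close>-contraction, so testing
  against indicators suffices.\<close>

lemma is_adjoint_image_indicatorI:
  assumes T: "markov_operator M T" and E: "E \<in> sets M"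
    and g: "g \<in> borel_measurable M" "AE x in M. \<bar>g x\<bar> \<le> C"
    and indicators: "\<And>F. F \<in> sets M \<Longrightarrow> emeasure M F < \<infinity> \<Longrightarrow>
      (\<integral>x. T (indicator F) x * indicator E x \<partial>M) = (\<integral>x. indicator F x * g x \<partial>M)"
  shows "is_adjoint_image M T (indicator E) g"
  unfolding is_adjoint_image_def
proof (intro conjI allI impI exI)
  have L: "L1_operator M T" using T by (rule markov_operator_L1_operator)
  have TE: "integrable M (\<lambda>x. T f x * indicator E x)" if "integrable M f" for f
    using that E by (intro integrable_real_mult_indicator markov_operator_integrable[OF T])
  have fg: "integrable M (\<lambda>x. f x * g x)" if "integrable M f" for f
    using that g by (rule integrable_mult_bounded)
  fix f :: "'a \<Rightarrow> real"
  assume "integrable M f"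
  then show "(\<integral>x. T f x * indicator E x \<partial>M) = (\<integral>x. f x * g x \<partial>M)"
  proof (induct rule: integrable_induct)
    case (base F c)
    then have F: "integrable M (indicator F :: 'a \<Rightarrow> real)" by auto
    have "(\<integral>x. T (\<lambda>x. indicator F x *\<^sub>R c) x * indicator E x \<partial>M)
        = (\<integral>x. c * (T (indicator F) x * indicator E x) \<partial>M)"
      using L1_operator_cmult[OF L F, of c] TE[OF F] TE[of "\<lambda>x. c * indicator F x"] F
      by (intro integral_cong_AE) (auto simp: mult.commute elim!: eventually_mono)
    also have "\<dots> = (\<integral>x. indicator F x *\<^sub>R c * g x \<partial>M)"
      using indicators[OF base] by (simp add: mult.assoc mult.left_commute)
    finally show ?case .
  next
    case (add f h)
    have "(\<integral>x. T (\<lambda>x. f x + h x) x * indicator E x \<partial>M)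
        = (\<integral>x. T f x * indicator E x + T h x * indicator E x \<partial>M)"
      using L1_operator_add[OF L add(1,3)] TE[OF add(1)] TE[OF add(3)] TE[of "\<lambda>x. f x + h x"] add
      by (intro integral_cong_AE) (auto simp: algebra_simps elim!: eventually_mono)
    also have "\<dots> = (\<integral>x. f x * g x + h x * g x \<partial>M)"
      using TE[OF add(1)] TE[OF add(3)] fg[OF add(1)] fg[OF add(3)] add(2,4) by simp
    finally show ?case by (simp add: distrib_right)
  next
    case (lim f s)
    have T_conv: "(\<lambda>i. \<integral>x. T (s i) x * indicator E x \<partial>M) \<longlonglongrightarrow> (\<integral>x. T f x * indicator E x \<partial>M)"
    proof (rule Lim_null_comparison[THEN LIM_zero_cancel])
      show "(\<lambda>i. \<integral>x. \<bar>f x - s i x\<bar> \<partial>M) \<longlonglongrightarrow> 0"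
        using lim by (intro dominated_tendsto_L1) auto
      show "\<forall>\<^sub>F i in sequentially. norm ((\<integral>x. T (s i) x * indicator E x \<partial>M) - (\<integral>x. T f x * indicator E x \<partial>M))
          \<le> (\<integral>x. \<bar>f x - s i x\<bar> \<partial>M)"
        using markov_operator_pairing_dist_le[OF T E lim(5,1)] by simp
    qed
    have g_conv: "(\<lambda>i. \<integral>x. s i x * g x \<partial>M) \<longlonglongrightarrow> (\<integral>x. f x * g x \<partial>M)"
      using lim g by (intro dominated_tendsto_integral_mult_bounded) auto
    show ?case using LIMSEQ_unique[OF T_conv[unfolded lim(2)] g_conv] .
  qed
qed (use g in auto)

lemma AE_of_AE_finite_measure_sets:
  assumes "sigma_finite_measure M"
    and finite_sets: "\<And>F. F \<in> sets M \<Longrightarrow> emeasure M F < \<infinity> \<Longrightarrow> AE x in M. x \<in> F \<longrightarrow> P x"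
  shows "AE x in M. P x"
proof -
  obtain A :: "nat \<Rightarrow> 'a set" where A: "range A \<subseteq> sets M" "(\<Union>i. A i) = space M"
    "\<And>i. emeasure M (A i) \<noteq> \<infinity>"
    using sigma_finite_measure.sigma_finite_incseq[OF assms(1)] by metis
  have "AE x in M. \<forall>i. x \<in> A i \<longrightarrow> P x"
    unfolding AE_all_countable using A by (intro allI finite_sets) (auto simp: less_top)
  with AE_space show ?thesis
  proof eventually_elim
    case (elim x)
    with A(2) show ?case by blast
  qed
qed

lemma AE_nonneg_of_integral_indicator_nonneg:
  fixes g :: "'a \<Rightarrow> real"
  assumes M: "sigma_finite_measure M"
    and g: "g \<in> borel_measurable M" "AE x in M. \<bar>g x\<bar> \<le> C"
    and nonneg: "\<And>F. F \<in> sets M \<Longrightarrow> emeasure M F < \<infinity> \<Longrightarrow> 0 \<le> (\<integral>x. indicator F x * g x \<partial>M)"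
  shows "AE x in M. 0 \<le> g x"
proof (rule AE_of_AE_finite_measure_sets[OF M])
  fix F
  assume F: "F \<in> sets M" "emeasure M F < \<infinity>"
  define G where "G = F \<inter> {x \<in> space M. g x < 0}"
  have G: "G \<in> sets M" "emeasure M G < \<infinity>"
    using F g(1) emeasure_mono[of G F M] by (auto simp: G_def)
  have int: "integrable M (\<lambda>x. - (indicator G x * g x))"
    using G g by (intro integrable_minus integrable_mult_bounded) auto
  have nn: "0 \<le> - (indicator G x * g x)" for x
    by (auto simp: G_def indicator_def)
  have "0 \<le> (\<integral>x. - (indicator G x * g x) \<partial>M)"
    using nn by (intro integral_nonneg_AE AE_I2)
  then have "(\<integral>x. - (indicator G x * g x) \<partial>M) = 0"
    using nonneg[OF G] by simp
  then have "AE x in M. - (indicator G x * g x) = 0"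
    using integral_nonneg_eq_0_iff_AE[OF int] nn by simp
  with AE_space show "AE x in M. x \<in> F \<longrightarrow> 0 \<le> g x"
    by eventually_elim (auto simp: G_def indicator_def not_less)
qed

lemma AE_le_1_of_nn_integral_indicator_le:
  assumes M: "sigma_finite_measure M" and h [measurable]: "h \<in> borel_measurable M"
    and le: "\<And>F. F \<in> sets M \<Longrightarrow> emeasure M F < \<infinity> \<Longrightarrow> (\<integral>\<^sup>+x. h x * indicator F x \<partial>M) \<le> emeasure M F"
  shows "AE x in M. h x \<le> 1"
proof (rule AE_of_AE_finite_measure_sets[OF M])
  fix F
  assume F: "F \<in> sets M" "emeasure M F < \<infinity>"
  define B where "B = F \<inter> {x \<in> space M. 1 < h x}"
  have B [measurable]: "B \<in> sets M" and B_finite: "emeasure M B < \<infinity>"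
    using F emeasure_mono[of B F M] by (auto simp: B_def)
  have "AE x in M. h x * indicator B x \<le> indicator B x"
  proof (rule ccontr)
    assume *: "\<not> (AE x in M. h x * indicator B x \<le> indicator B x)"
    have "emeasure M B = (\<integral>\<^sup>+x. indicator B x \<partial>M)" by simp
    also have "\<dots> < (\<integral>\<^sup>+x. h x * indicator B x \<partial>M)"
    proof (rule nn_integral_less)
      show "(\<integral>\<^sup>+x. indicator B x \<partial>M) \<noteq> \<infinity>" using B_finite by simp
      show "AE x in M. indicator B x \<le> h x * indicator B x"
        by (intro AE_I2) (auto simp: B_def indicator_def less_imp_le)
    qed (use * in auto)
    also have "\<dots> \<le> emeasure M B" by (rule le[OF B B_finite])
    finally show False by simp
  qed
  with AE_space show "AE x in M. x \<in> F \<longrightarrow> h x \<le> 1"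
    by eventually_elim (auto simp: B_def indicator_def of_bool_def not_less split: if_splits)
qed

text \<open>\<open>mass_into_E\<close> extends to a measure dominated by \<open>\<mu>\<close>, whose Radon-Nikodym density is
  \<open>T\<^sup>* \<chi>\<^sub>E\<close>.\<close>

locale markov_pairing =
  fixes M :: "'a measure" and T :: "('a \<Rightarrow> real) \<Rightarrow> 'a \<Rightarrow> real" and E :: "'a set"
  assumes markov: "markov_operator M T" and E_sets: "E \<in> sets M"
begin

definition mass_into_E :: "'a set \<Rightarrow> real"
  where "mass_into_E G = (\<integral>x. T (indicator G) x * indicator E x \<partial>M)"

lemma integrable_T_indicator_mult:
  "G \<in> sets M \<Longrightarrow> emeasure M G < \<infinity> \<Longrightarrow> integrable M (\<lambda>x. T (indicator G) x * indicator E x)"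
  using E_sets by (intro integrable_real_mult_indicator markov_operator_integrable[OF markov]) auto

lemma mass_into_E_nonneg:
  assumes "G \<in> sets M" "emeasure M G < \<infinity>"
  shows "0 \<le> mass_into_E G"
  unfolding mass_into_E_def using markov_operator_nonneg[OF markov, of "indicator G"] assms
  by (intro integral_nonneg_AE) (auto elim!: eventually_mono)

lemma mass_into_E_le_measure:
  assumes G: "G \<in> sets M" "emeasure M G < \<infinity>"
  shows "mass_into_E G \<le> measure M G"
proof -
  have "mass_into_E G \<le> (\<integral>x. T (indicator G) x \<partial>M)"
    unfolding mass_into_E_def
    using integrable_T_indicator_mult[OF G] markov_operator_integrable[OF markov, of "indicator G"]
      markov_operator_nonneg[OF markov, of "indicator G"] G
    by (intro integral_mono_AE) (auto elim!: eventually_mono simp: indicator_def)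
  also have "\<dots> = measure M G"
    using markov_operator_integral[OF markov, of "indicator G"] G by simp
  finally show ?thesis .
qed

lemma mass_into_E_Un:
  assumes G: "G \<in> sets M" "emeasure M G < \<infinity>" and H: "H \<in> sets M" "emeasure M H < \<infinity>"
    and disjoint: "G \<inter> H = {}"
  shows "mass_into_E (G \<union> H) = mass_into_E G + mass_into_E H"
proof -
  have L: "L1_operator M T" using markov by (rule markov_operator_L1_operator)
  have GH: "integrable M (indicator G :: 'a \<Rightarrow> real)" "integrable M (indicator H :: 'a \<Rightarrow> real)"
    using G H by auto
  have "(indicator (G \<union> H) :: 'a \<Rightarrow> real) = (\<lambda>y. indicator G y + indicator H y)"
    using disjoint by (auto simp: fun_eq_iff indicator_def)
  then have "mass_into_E (G \<union> H) = (\<integral>x. T (indicator G) x * indicator E x + T (indicator H) x * indicator E x \<partial>M)"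
    unfolding mass_into_E_def
    using L1_operator_add[OF L GH] integrable_T_indicator_mult[OF G] integrable_T_indicator_mult[OF H]
      L1_operator_integrable[OF L, of "\<lambda>y. indicator G y + indicator H y"] GH E_sets
    by (intro integral_cong_AE) (auto simp: algebra_simps elim!: eventually_mono)
  also have "\<dots> = mass_into_E G + mass_into_E H"
    unfolding mass_into_E_def using integrable_T_indicator_mult[OF G] integrable_T_indicator_mult[OF H] by simp
  finally show ?thesis .
qed

lemma mass_into_E_diff_le:
  assumes G: "G \<in> sets M" and H: "H \<in> sets M" "emeasure M H < \<infinity>" and "G \<subseteq> H"
  shows "0 \<le> mass_into_E H - mass_into_E G" "mass_into_E H - mass_into_E G \<le> measure M H - measure M G"
proof -
  have G_finite: "emeasure M G < \<infinity>" using emeasure_mono[OF \<open>G \<subseteq> H\<close> H(1)] H(2) by simp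
  have D: "H - G \<in> sets M" "emeasure M (H - G) < \<infinity>"
    using G H emeasure_mono[of "H - G" H M] by auto
  have "mass_into_E H = mass_into_E G + mass_into_E (H - G)"
    using mass_into_E_Un[OF G G_finite D] \<open>G \<subseteq> H\<close> by (simp add: Un_absorb1 Un_Diff_cancel)
  moreover have "measure M (H - G) = measure M H - measure M G"
    using G H \<open>G \<subseteq> H\<close> by (intro measure_Diff) (auto simp: less_top)
  ultimately show "0 \<le> mass_into_E H - mass_into_E G" "mass_into_E H - mass_into_E G \<le> measure M H - measure M G"
    using mass_into_E_nonneg[OF D] mass_into_E_le_measure[OF D] by linarith+
qed

lemma mass_into_E_incseq_tendsto:
  assumes U: "range U \<subseteq> sets M" "incseq U" and finite: "emeasure M (\<Union>k. U k) < \<infinity>"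
  shows "(\<lambda>k. mass_into_E (U k)) \<longlonglongrightarrow> mass_into_E (\<Union>k. U k)"
proof -
  have "(\<lambda>k. measure M (U k)) \<longlonglongrightarrow> measure M (\<Union>k. U k)"
    using Lim_measure_incseq[OF U] finite by simp
  then have "(\<lambda>k. measure M (\<Union>k. U k) - measure M (U k)) \<longlonglongrightarrow> measure M (\<Union>k. U k) - measure M (\<Union>k. U k)"
    by (intro tendsto_diff tendsto_const)
  then have measure_gap: "(\<lambda>k. measure M (\<Union>k. U k) - measure M (U k)) \<longlonglongrightarrow> 0"
    by simp
  have "norm (mass_into_E (\<Union>k. U k) - mass_into_E (U k)) \<le> measure M (\<Union>k. U k) - measure M (U k)" for k
  proof -
    have "U k \<in> sets M" "(\<Union>k. U k) \<in> sets M" "U k \<subseteq> (\<Union>k. U k)" using U(1) by auto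
    from mass_into_E_diff_le[OF this(1,2) finite this(3)] show ?thesis by simp
  qed
  then have "(\<lambda>k. mass_into_E (\<Union>k. U k) - mass_into_E (U k)) \<longlonglongrightarrow> 0"
    by (intro Lim_null_comparison[OF always_eventually measure_gap]) blast
  from tendsto_diff[OF tendsto_const[of "mass_into_E (\<Union>k. U k)"] this] show ?thesis by simp
qed

lemma mass_into_E_sums:
  assumes G: "range G \<subseteq> sets M" "disjoint_family G" and finite: "emeasure M (\<Union>i. G i) < \<infinity>"
  shows "(\<lambda>i. mass_into_E (G i)) sums mass_into_E (\<Union>i. G i)"
proof -
  define U where "U k = (\<Union>i<k. G i)" for k
  have U_sets: "U k \<in> sets M" for k unfolding U_def using G(1) by auto
  have finite_subset: "emeasure M F < \<infinity>" if "F \<subseteq> (\<Union>i. G i)" for F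
    using le_less_trans[OF emeasure_mono[OF that] finite] G(1) by auto
  have U_finite: "emeasure M (U k) < \<infinity>" for k
    by (rule finite_subset) (auto simp: U_def)
  have G_finite: "emeasure M (G k) < \<infinity>" for k
    by (rule finite_subset) auto
  have partial: "(\<Sum>i<k. mass_into_E (G i)) = mass_into_E (U k)" for k
  proof (induct k)
    case 0
    then show ?case using mass_into_E_nonneg[of "{}"] mass_into_E_le_measure[of "{}"] by (simp add: U_def)
  next
    case (Suc k)
    have "U k \<inter> G k = {}"
    proof (rule equals0I)
      fix x
      assume "x \<in> U k \<inter> G k"
      then obtain i where "i < k" "x \<in> G i" "x \<in> G k" by (auto simp: U_def)
      with disjoint_family_onD[OF G(2), of i k] show False by auto
    qed
    then have "mass_into_E (U (Suc k)) = mass_into_E (U k) + mass_into_E (G k)"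
      using mass_into_E_Un[OF U_sets U_finite _ G_finite] G(1)
      by (simp add: U_def lessThan_Suc sup_commute)
    with Suc show ?case by simp
  qed
  have "(\<Union>k. U k) = (\<Union>i. G i)" by (auto simp: U_def)
  moreover have "incseq U" by (force simp: incseq_def U_def)
  ultimately have "(\<lambda>k. mass_into_E (U k)) \<longlonglongrightarrow> mass_into_E (\<Union>i. G i)"
    using mass_into_E_incseq_tendsto[of U] U_sets finite by auto
  then show ?thesis unfolding sums_def partial .
qed

end

locale markov_pairing_exhaustion = markov_pairing +
  fixes A :: "nat \<Rightarrow> 'a set"
  assumes A_sets: "range A \<subseteq> sets M" and A_Union: "(\<Union>i. A i) = space M"
    and A_finite: "\<And>i. emeasure M (A i) \<noteq> \<infinity>" and A_incseq: "incseq A"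
begin

definition mass_into_E_measure :: "'a set \<Rightarrow> ennreal"
  where "mass_into_E_measure F = (SUP n. ennreal (mass_into_E (F \<inter> A n)))"

lemma Int_A_finite:
  assumes "F \<in> sets M"
  shows "F \<inter> A n \<in> sets M" "emeasure M (F \<inter> A n) < \<infinity>"
proof -
  show "F \<inter> A n \<in> sets M" using assms A_sets by auto
  have "emeasure M (F \<inter> A n) \<le> emeasure M (A n)"
    using A_sets by (intro emeasure_mono) auto
  then show "emeasure M (F \<inter> A n) < \<infinity>"
    using A_finite[of n] by (simp add: less_top order.strict_trans1)
qed

lemma incseq_Int_A: "incseq (\<lambda>n. F \<inter> A n)"
  unfolding incseq_def using monoD[OF A_incseq] by blast

lemma incseq_mass_into_E_Int_A: "F \<in> sets M \<Longrightarrow> incseq (\<lambda>n. mass_into_E (F \<inter> A n))"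
  unfolding incseq_def using mass_into_E_diff_le(1)[OF Int_A_finite(1) Int_A_finite] incseq_Int_A[THEN monoD]
  by fastforce

lemma mass_into_E_measure_eq:
  assumes F: "F \<in> sets M" "emeasure M F < \<infinity>"
  shows "mass_into_E_measure F = ennreal (mass_into_E F)"
proof -
  have "(\<Union>n. F \<inter> A n) = F" using A_Union sets.sets_into_space[OF F(1)] by blast
  moreover have "(\<lambda>n. mass_into_E (F \<inter> A n)) \<longlonglongrightarrow> mass_into_E (\<Union>n. F \<inter> A n)"
    using Int_A_finite[OF F(1)] incseq_Int_A F(2) calculation
    by (intro mass_into_E_incseq_tendsto) auto
  ultimately have "(\<lambda>n. ennreal (mass_into_E (F \<inter> A n))) \<longlonglongrightarrow> ennreal (mass_into_E F)"
    by (intro tendsto_ennrealI) simp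
  moreover have "incseq (\<lambda>n. ennreal (mass_into_E (F \<inter> A n)))"
    using incseq_mass_into_E_Int_A[OF F(1)] by (auto simp: incseq_def ennreal_leI)
  ultimately show ?thesis
    unfolding mass_into_E_measure_def using LIMSEQ_SUP LIMSEQ_unique by blast
qed

lemma countably_additive_mass_into_E_measure: "countably_additive (sets M) mass_into_E_measure"
  unfolding countably_additive_def
proof (intro allI impI)
  fix F :: "nat \<Rightarrow> 'a set"
  assume F: "range F \<subseteq> sets M" "disjoint_family F" "(\<Union>i. F i) \<in> sets M"
  have "(\<Sum>i. mass_into_E_measure (F i)) = (SUP n. \<Sum>i. ennreal (mass_into_E (F i \<inter> A n)))"
    unfolding mass_into_E_measure_def using F(1) incseq_mass_into_E_Int_A
    by (intro ennreal_suminf_SUP_eq) (auto simp: incseq_def ennreal_leI)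
  also have "\<dots> = (SUP n. ennreal (mass_into_E ((\<Union>i. F i) \<inter> A n)))"
  proof (rule SUP_cong[OF refl])
    fix n
    have "(\<lambda>i. mass_into_E (F i \<inter> A n)) sums mass_into_E (\<Union>i. F i \<inter> A n)"
      using F Int_A_finite[OF F(3), of n] Int_A_finite[of "F i" n for i]
      by (intro mass_into_E_sums) (auto simp: disjoint_family_on_def)
    then show "(\<Sum>i. ennreal (mass_into_E (F i \<inter> A n))) = ennreal (mass_into_E ((\<Union>i. F i) \<inter> A n))"
      using F(1) Int_A_finite[of "F i" n for i] mass_into_E_nonneg
      by (subst suminf_ennreal2) (auto simp: sums_iff)
  qed
  finally show "(\<Sum>i. mass_into_E_measure (F i)) = mass_into_E_measure (\<Union>i. F i)"
    unfolding mass_into_E_measure_def .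
qed

definition mass_into_E_M :: "'a measure"
  where "mass_into_E_M = measure_of (space M) (sets M) mass_into_E_measure"

lemma sets_mass_into_E_M [simp]: "sets mass_into_E_M = sets M"
  unfolding mass_into_E_M_def by (simp add: sets_measure_of sets.space_closed sets.sigma_sets_eq)

lemma emeasure_mass_into_E_M: "F \<in> sets M \<Longrightarrow> emeasure mass_into_E_M F = mass_into_E_measure F"
  unfolding mass_into_E_M_def
  using mass_into_E_measure_eq[of "{}"] mass_into_E_nonneg[of "{}"] mass_into_E_le_measure[of "{}"]
  by (intro emeasure_measure_of_sigma sets.sigma_algebra_axioms countably_additive_mass_into_E_measure)
     (auto simp: positive_def)

lemma absolutely_continuous_mass_into_E_M: "absolutely_continuous M mass_into_E_M"
  unfolding absolutely_continuous_def
proof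
  fix F
  assume F: "F \<in> null_sets M"
  have "mass_into_E (F \<inter> A n) \<le> 0" for n
  proof -
    have "F \<inter> A n \<in> null_sets M" using F A_sets by (auto intro: null_set_Int2)
    then have "measure M (F \<inter> A n) = 0" by (simp add: measure_def null_setsD1)
    with mass_into_E_le_measure[OF Int_A_finite, of F n] F show ?thesis by auto
  qed
  then have "ennreal (mass_into_E (F \<inter> A n)) = 0" for n
    by (simp add: ennreal_eq_0_iff)
  then have "mass_into_E_measure F = 0"
    unfolding mass_into_E_measure_def by simp
  moreover have "F \<in> sets M" using F by auto
  ultimately show "F \<in> null_sets mass_into_E_M"
    by (simp add: null_sets_def emeasure_mass_into_E_M)
qed

lemma sigma_finite: "sigma_finite_measure M"
  by unfold_locales (use A_sets A_Union A_finite in \<open>auto intro!: exI[of _ "range A"]\<close>)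

context
  fixes h :: "'a \<Rightarrow> ennreal"
  assumes h [measurable]: "h \<in> borel_measurable M" and density: "density M h = mass_into_E_M"
begin

lemma nn_integral_density_indicator:
  "F \<in> sets M \<Longrightarrow> emeasure M F < \<infinity> \<Longrightarrow> (\<integral>\<^sup>+x. h x * indicator F x \<partial>M) = ennreal (mass_into_E F)"
  using emeasure_density[OF h, of F] by (simp add: density emeasure_mass_into_E_M mass_into_E_measure_eq)

lemma density_le_1: "AE x in M. h x \<le> 1"
proof (rule AE_le_1_of_nn_integral_indicator_le[OF sigma_finite h])
  fix F
  assume F: "F \<in> sets M" "emeasure M F < \<infinity>"
  then show "(\<integral>\<^sup>+x. h x * indicator F x \<partial>M) \<le> emeasure M F"
    using mass_into_E_le_measure[OF F]
    by (simp add: nn_integral_density_indicator emeasure_eq_ennreal_measure less_top ennreal_leI)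
qed

lemma is_adjoint_image_density: "is_adjoint_image M T (indicator E) (\<lambda>x. enn2real (h x))"
proof (rule is_adjoint_image_indicatorI[OF markov E_sets])
  show "AE x in M. \<bar>enn2real (h x)\<bar> \<le> 1"
    using density_le_1 by eventually_elim (simp add: enn2real_leI)
  then have "integrable M (\<lambda>x. indicator F x * enn2real (h x))"
    if "F \<in> sets M" "emeasure M F < \<infinity>" for F
    using that by (intro integrable_mult_bounded) auto
  moreover have "AE x in M. h x = ennreal (enn2real (h x))"
    using density_le_1 by eventually_elim (auto simp: ennreal_enn2real_if top_unique)
  ultimately have ennreal_eq: "ennreal (\<integral>x. indicator F x * enn2real (h x) \<partial>M) = ennreal (mass_into_E F)"
    if "F \<in> sets M" "emeasure M F < \<infinity>" for F
    using that
    by (subst nn_integral_eq_integral[symmetric])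
       (auto simp: nn_integral_density_indicator[symmetric] indicator_def intro!: nn_integral_cong_AE
             elim!: eventually_mono)
  show "(\<integral>x. T (indicator F) x * indicator E x \<partial>M) = (\<integral>x. indicator F x * enn2real (h x) \<partial>M)"
    if "F \<in> sets M" "emeasure M F < \<infinity>" for F
  proof -
    have "0 \<le> (\<integral>x. indicator F x * enn2real (h x) \<partial>M)" by (intro integral_nonneg_AE AE_I2) simp
    with ennreal_eq[OF that] mass_into_E_nonneg[OF that] show ?thesis by (simp add: mass_into_E_def)
  qed
qed simp

end

end

lemma markov_operator_adjoint_indicator_exists:
  assumes M: "sigma_finite_measure M" and T: "markov_operator M T" and E: "E \<in> sets M"
  obtains g where "is_adjoint_image M T (indicator E) g" "\<And>x. 0 \<le> g x"
proof -
  obtain A :: "nat \<Rightarrow> 'a set" where A: "range A \<subseteq> sets M" "(\<Union>i. A i) = space M"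
    "\<And>i. emeasure M (A i) \<noteq> \<infinity>" "incseq A"
    using sigma_finite_measure.sigma_finite_incseq[OF M] by metis
  interpret markov_pairing_exhaustion M T E A
    using T E A by unfold_locales auto
  obtain h where "h \<in> borel_measurable M" "density M h = mass_into_E_M"
    using sigma_finite_measure.Radon_Nikodym[OF M absolutely_continuous_mass_into_E_M sets_mass_into_E_M]
    by blast
  from is_adjoint_image_density[OF this] show ?thesis
    by (rule that) simp
qed

section \<open>Semi-doubly stochastic extensions\<close>

lemma extends_simple_integrable_AE_eq:
  assumes "linear_simple_map M S" "markov_operator M T" "extends_simple M S T" "f \<in> simple_L1 M"
  shows "integrable M (S f)" "AE x in M. T f x = S f x"
  using assms simple_L1_integrable
  unfolding linear_simple_map_def extends_simple_def by blast+

lemma extends_simple_nonneg: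
  assumes "markov_operator M T" "extends_simple M S T" "f \<in> simple_L1 M" "AE x in M. 0 \<le> f x"
  shows "AE x in M. 0 \<le> S f x"
  using markov_operator_nonneg[OF assms(1) simple_L1_integrable[OF assms(3)] assms(4)] assms(2,3)
  unfolding extends_simple_def by (auto elim: AE_mp)

lemma extends_simple_integral_indicator:
  assumes S: "linear_simple_map M S" and T: "markov_operator M T" "extends_simple M S T"
    and E: "E \<in> sets M" "emeasure M E < \<infinity>"
  shows "(\<integral>x. S (indicator E) x \<partial>M) = measure M E"
proof -
  note E_simple = simple_L1_indicator[OF E]
  have "(\<integral>x. S (indicator E) x \<partial>M) = (\<integral>x. T (indicator E) x \<partial>M)"
    using extends_simple_integrable_AE_eq[OF S T E_simple]
      markov_operator_integrable[OF T(1) simple_L1_integrable[OF E_simple]]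
    by (intro integral_cong_AE) (auto elim: eventually_mono)
  also have "\<dots> = measure M E"
    using markov_operator_integral[OF T(1) simple_L1_integrable[OF E_simple]] E by simp
  finally show ?thesis .
qed

lemma integral_indicator_mult_S_eq_adjoint:
  assumes S: "linear_simple_map M S" and T: "markov_operator M T" "extends_simple M S T"
    and E: "E \<in> sets M" and g: "is_adjoint_image M T (indicator E) g"
    and F: "F \<in> sets M" "emeasure M F < \<infinity>"
  shows "(\<integral>x. indicator E x * S (indicator F) x \<partial>M) = (\<integral>x. indicator F x * g x \<partial>M)"
proof -
  note F_simple = simple_L1_indicator[OF F]
  have "(\<integral>x. indicator E x * S (indicator F) x \<partial>M) = (\<integral>x. T (indicator F) x * indicator E x \<partial>M)"
    using extends_simple_integrable_AE_eq[OF S T F_simple]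
      markov_operator_integrable[OF T(1) simple_L1_integrable[OF F_simple]] E
    by (intro integral_cong_AE) (auto elim: eventually_mono)
  also have "\<dots> = (\<integral>x. indicator F x * g x \<partial>M)"
    using g simple_L1_integrable[OF F_simple] unfolding is_adjoint_image_def by blast
  finally show ?thesis .
qed

lemma adjoint_image_indicator_nonneg:
  assumes M: "sigma_finite_measure M" and T: "markov_operator M T"
    and g: "is_adjoint_image M T (indicator E) g"
  shows "AE x in M. 0 \<le> g x"
proof -
  obtain C where C: "AE x in M. \<bar>g x\<bar> \<le> C" using g unfolding is_adjoint_image_def by blast
  show ?thesis
  proof (rule AE_nonneg_of_integral_indicator_nonneg[OF M _ C])
    show "g \<in> borel_measurable M" using g unfolding is_adjoint_image_def by blast
    fix F
    assume "F \<in> sets M" "emeasure M F < \<infinity>"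
    then have F: "integrable M (indicator F :: 'a \<Rightarrow> real)" by auto
    have "0 \<le> (\<integral>x. T (indicator F) x * indicator E x \<partial>M)"
      using markov_operator_nonneg[OF T F] by (intro integral_nonneg_AE) (auto elim: eventually_mono)
    then show "0 \<le> (\<integral>x. indicator F x * g x \<partial>M)"
      using g F unfolding is_adjoint_image_def by simp
  qed
qed

lemma adjoint_indicator_tendsto_nn_integral:
  assumes M: "sigma_finite_measure M" and T: "markov_operator M T"
    and g: "is_adjoint_image M T (indicator E) g"
    and A: "\<And>n. A n \<in> sets M" "\<And>n. emeasure M (A n) < \<infinity>" "\<And>n. A n \<subseteq> A (Suc n)"
      "(\<Union>n. A n) = space M"
  shows "(\<lambda>n. ennreal (\<integral>x. indicator (A n) x * g x \<partial>M)) \<longlonglongrightarrow> (\<integral>\<^sup>+x. ennreal (g x) \<partial>M)"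
proof -
  have g_meas [measurable]: "g \<in> borel_measurable M" and C: "\<exists>C. AE x in M. \<bar>g x\<bar> \<le> C"
    using g unfolding is_adjoint_image_def by blast+
  note g_nonneg = adjoint_image_indicator_nonneg[OF M T g]
  have A_mono: "incseq A" using A(3) by (simp add: incseq_Suc_iff)
  have pieces: "(\<integral>\<^sup>+x. ennreal (g x) * indicator (A n) x \<partial>M) = ennreal (\<integral>x. indicator (A n) x * g x \<partial>M)" for n
  proof -
    have "integrable M (\<lambda>x. indicator (A n) x * g x)"
      using A(1,2) C by (auto intro: integrable_mult_bounded[OF _ g_meas])
    then have "ennreal (\<integral>x. indicator (A n) x * g x \<partial>M) = (\<integral>\<^sup>+x. ennreal (indicator (A n) x * g x) \<partial>M)"
      using g_nonneg by (intro nn_integral_eq_integral[symmetric]) (auto elim: eventually_mono)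
    also have "\<dots> = (\<integral>\<^sup>+x. ennreal (g x) * indicator (A n) x \<partial>M)"
      by (intro nn_integral_cong) (simp split: split_indicator)
    finally show ?thesis ..
  qed
  have "(\<lambda>n. \<integral>\<^sup>+x. ennreal (g x) * indicator (A n) x \<partial>M) \<longlonglongrightarrow> (SUP n. \<integral>\<^sup>+x. ennreal (g x) * indicator (A n) x \<partial>M)"
    using A_mono by (intro LIMSEQ_SUP incseq_nn_integral) (auto simp: incseq_def le_fun_def indicator_def dest: monoD)
  also have "(SUP n. \<integral>\<^sup>+x. ennreal (g x) * indicator (A n) x \<partial>M) = (\<integral>\<^sup>+x. (SUP n. ennreal (g x) * indicator (A n) x) \<partial>M)"
    using A(1) A_mono
    by (intro nn_integral_monotone_convergence_SUP[symmetric])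
       (auto simp: incseq_def le_fun_def indicator_def dest: monoD)
  also have "\<dots> = (\<integral>\<^sup>+x. ennreal (g x) \<partial>M)"
  proof (rule nn_integral_cong)
    fix x
    assume "x \<in> space M"
    then obtain m where "x \<in> A m" using A(4) by blast
    then have "ennreal (g x) \<le> (SUP n. ennreal (g x) * indicator (A n) x)"
      by (intro SUP_upper2[of m]) auto
    then show "(SUP n. ennreal (g x) * indicator (A n) x) = ennreal (g x)"
      by (intro antisym SUP_least) (auto simp: indicator_def)
  qed
  finally show ?thesis unfolding pieces .
qed

lemma semi_doubly_stochastic_limit_le:
  assumes M: "sigma_finite_measure M" and S: "linear_simple_map M S"
    and T: "extends_simple M S T" "semi_doubly_stochastic M T"
    and A: "\<And>n. A n \<in> sets M" "\<And>n. emeasure M (A n) < \<infinity>" "\<And>n. A n \<subseteq> A (Suc n)"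
      "(\<Union>n. A n) = space M"
    and E: "E \<in> sets M" "emeasure M E < \<infinity>"
  shows "\<exists>L. (\<lambda>n. \<integral>x. indicator E x * S (indicator (A n)) x \<partial>M) \<longlonglongrightarrow> L \<and> L \<le> measure M E"
proof -
  have markov: "markov_operator M T" using T(2) by (simp add: semi_doubly_stochastic_def)
  obtain g where g: "is_adjoint_image M T (indicator E) g" "\<And>x. 0 \<le> g x"
    using markov_operator_adjoint_indicator_exists[OF M markov E(1)] by blast
  have mass: "(\<integral>\<^sup>+x. ennreal (g x) \<partial>M) \<le> emeasure M E"
    using T(2) E g(1) unfolding semi_doubly_stochastic_def by blast
  then have "(\<integral>\<^sup>+x. ennreal (g x) \<partial>M) = ennreal (enn2real (\<integral>\<^sup>+x. ennreal (g x) \<partial>M))"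
    using E(2) by (simp add: ennreal_enn2real_if top_unique)
  with adjoint_indicator_tendsto_nn_integral[OF M markov g(1) A]
  have "(\<lambda>n. enn2real (ennreal (\<integral>x. indicator (A n) x * g x \<partial>M)))
      \<longlonglongrightarrow> enn2real (\<integral>\<^sup>+x. ennreal (g x) \<partial>M)"
    by (intro tendsto_enn2real) simp_all
  then have "(\<lambda>n. \<integral>x. indicator E x * S (indicator (A n)) x \<partial>M) \<longlonglongrightarrow> enn2real (\<integral>\<^sup>+x. ennreal (g x) \<partial>M)"
    by (simp add: integral_indicator_mult_S_eq_adjoint[OF S markov T(1) E(1) g(1) A(1,2)]
        integral_nonneg_AE g(2))
  moreover have "enn2real (\<integral>\<^sup>+x. ennreal (g x) \<partial>M) \<le> measure M E"
    using mass E(2) by (simp add: measure_def enn2real_mono)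
  ultimately show ?thesis by blast
qed

lemma semi_doubly_stochastic_if_limit_le:
  assumes M: "sigma_finite_measure M" and S: "linear_simple_map M S"
    and T: "markov_operator M T" "extends_simple M S T"
    and A: "\<And>n. A n \<in> sets M" "\<And>n. emeasure M (A n) < \<infinity>" "\<And>n. A n \<subseteq> A (Suc n)"
      "(\<Union>n. A n) = space M"
    and limit_le: "\<And>E. E \<in> sets M \<Longrightarrow> emeasure M E < \<infinity> \<Longrightarrow>
      \<exists>L. (\<lambda>n. \<integral>x. indicator E x * S (indicator (A n)) x \<partial>M) \<longlonglongrightarrow> L \<and> L \<le> measure M E"
  shows "semi_doubly_stochastic M T"
  unfolding semi_doubly_stochastic_def
proof (intro conjI T ballI impI allI)
  fix E g
  assume E: "E \<in> sets M" "emeasure M E < \<infinity>" and g: "is_adjoint_image M T (indicator E) g"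
  obtain L where L: "(\<lambda>n. \<integral>x. indicator E x * S (indicator (A n)) x \<partial>M) \<longlonglongrightarrow> L" "L \<le> measure M E"
    using limit_le[OF E] by blast
  have "(\<lambda>n. ennreal (\<integral>x. indicator (A n) x * g x \<partial>M)) \<longlonglongrightarrow> ennreal L"
    using tendsto_ennrealI[OF L(1)]
    by (simp add: integral_indicator_mult_S_eq_adjoint[OF S T E(1) g A(1,2)])
  then have "(\<integral>\<^sup>+x. ennreal (g x) \<partial>M) = ennreal L"
    using adjoint_indicator_tendsto_nn_integral[OF M T(1) g A] LIMSEQ_unique by blast
  also have "\<dots> \<le> emeasure M E"
    using L(2) E(2) by (simp add: emeasure_eq_ennreal_measure less_top ennreal_leI)
  finally show "(\<integral>\<^sup>+x. ennreal (g x) \<partial>M) \<le> emeasure M E" .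
qed

theorem theorem3p2:
  fixes M :: "'a measure" and A :: "nat \<Rightarrow> 'a set"
    and S :: "('a \<Rightarrow> real) \<Rightarrow> ('a \<Rightarrow> real)"
  assumes "sigma_finite_measure M"
    and "\<And>n. A n \<in> sets M" and "\<And>n. emeasure M (A n) < \<infinity>"
    and "\<And>n. A n \<subseteq> A (Suc n)"
    and "(\<Union>n. A n) = space M"
    and "linear_simple_map M S"
  shows "((\<exists>T. extends_simple M S T \<and> semi_doubly_stochastic M T) \<and>
          (\<forall>T1 T2. extends_simple M S T1 \<and> semi_doubly_stochastic M T1 \<and>
                   extends_simple M S T2 \<and> semi_doubly_stochastic M T2 \<longrightarrow>
                   (\<forall>f. integrable M f \<longrightarrow> (AE x in M. T1 f x = T2 f x))))
     \<longleftrightarrow>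
         ((\<forall>f\<in>simple_L1 M. (AE x in M. 0 \<le> f x) \<longrightarrow> (AE x in M. 0 \<le> S f x)) \<and>
          (\<forall>E\<in>sets M. emeasure M E < \<infinity> \<longrightarrow>
             (\<integral>x. S (indicator E) x \<partial>M) = measure M E \<and>
             (\<exists>L. (\<lambda>n. \<integral>x. indicator E x * S (indicator (A n)) x \<partial>M) \<longlonglongrightarrow> L
                  \<and> L \<le> measure M E)))"
proof (rule iffI, goal_cases)
  case 1
  then obtain T where T: "extends_simple M S T" "semi_doubly_stochastic M T" by blast
  then have markov: "markov_operator M T" by (simp add: semi_doubly_stochastic_def)
  show ?case
    using extends_simple_nonneg[OF markov T(1)] extends_simple_integral_indicator[OF assms(6) markov T(1)]
      semi_doubly_stochastic_limit_le[OF assms(1,6) T assms(2-5)]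
    by blast
next
  case 2
  then interpret positive_simple_map M S
    using assms(6) by unfold_locales blast+
  have "semi_doubly_stochastic M S_ext"
    using 2 by (intro semi_doubly_stochastic_if_limit_le[OF assms(1,6) S_ext_markov S_ext_extends assms(2-5)])
      blast
  then show ?case
    using S_ext_extends markov_extensions_unique unfolding semi_doubly_stochastic_def by blast
qed

end
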